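(* Let $\{\mathcal{C}_1,\dots,\mathcal{C}_9\}$ be a complete set of maximal commuting classes of three-qubit Pauli operators ($d=8$). Then there exists exactly one maximal commuting class $\mathcal{S}\subseteq\mathcal{C}_1\cup\dots\cup\mathcal{C}_5$ distinct from $\mathcal{C}_1,\dots,\mathcal{C}_5$. Moreover, $\{\mathcal{C}_6,\mathcal{C}_7,\mathcal{C}_8,\mathcal{C}_9,\mathcal{S}\}$ is an unextendible set of five Pauli classes, and their common eigenbases form a weakly unextendible set of five mutually unbiased bases in $\mathbb{C}^8$.
   Context: Three-qubit Pauli operators are the tensor products $P_1\otimes P_2\otimes P_3$ with $P_k\in\{I,X,Y,Z\}$; products are taken up to a phase. A maximal commuting class in $d=8$ is a set of $7$ mutually commuting non-identity three-qubit Pauli operators. A complete set of classes is a family of $9$ pairwise disjoint maximal commuting classes whose union is the set of all $63$ non-identity three-qubit Pauli operators. A set of pairwise disjoint maximal commuting classes $\{\mathcal{C}_1,\dots,\mathcal{C}_L\}$ is unextendible if no further maximal commuting class can be formed from the non-identity Pauli operators not in their union. Two orthonormal bases of $\mathbb{C}^d$ are mutually unbiased if $|\langle a|b\rangle|=1/\sqrt d$ for all vectors $a$ of the first and $b$ of the second; common eigenbases of pairwise disjoint maximal commuting Pauli classes are mutually unbiased. A set of such bases is weakly unextendible if there is no further basis, unbiased to all of them, that is the common eigenbasis of a maximal commuting class of Pauli operators. *)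

theory Defs
  imports "Jordan_Normal_Form.Matrix" "Jordan_Normal_Form.Char_Poly" Complex_Main
begin

datatype pauli1 = PI | PX | PY | PZ

type_synonym pauli3 = "pauli1 \<times> pauli1 \<times> pauli1"

fun pauli1_entry :: "pauli1 \<Rightarrow> nat \<Rightarrow> nat \<Rightarrow> complex" where
  "pauli1_entry PI i j = (if i = j then 1 else 0)"
| "pauli1_entry PX i j = (if i \<noteq> j then 1 else 0)"
| "pauli1_entry PY i j = (if i = 0 \<and> j = 1 then - \<i> else if i = 1 \<and> j = 0 then \<i> else 0)"
| "pauli1_entry PZ i j = (if i = j then (if i = 0 then 1 else -1) else 0)"

text \<open>Tensor product P1 (x) P2 (x) P3 as an 8 x 8 complex matrix; row/column index
  i in 0..7 has binary digits (i div 4, (i div 2) mod 2, i mod 2), the first qubit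
  being the most significant.\<close>
definition pauli_mat :: "pauli3 \<Rightarrow> complex mat" where
  "pauli_mat P = (case P of (P1, P2, P3) \<Rightarrow>
     mat 8 8 (\<lambda>(i, j). pauli1_entry P1 (i div 4) (j div 4)
                     * pauli1_entry P2 ((i div 2) mod 2) ((j div 2) mod 2)
                     * pauli1_entry P3 (i mod 2) (j mod 2)))"

definition nonid_paulis :: "pauli3 set" where
  "nonid_paulis = {P. P \<noteq> (PI, PI, PI)}"

definition commute :: "pauli3 \<Rightarrow> pauli3 \<Rightarrow> bool" where
  "commute P Q \<longleftrightarrow> pauli_mat P * pauli_mat Q = pauli_mat Q * pauli_mat P"

definition max_comm_class :: "pauli3 set \<Rightarrow> bool" where
  "max_comm_class S \<longleftrightarrow> S \<subseteq> nonid_paulis \<and> card S = 7 \<and>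
     (\<forall>P\<in>S. \<forall>Q\<in>S. commute P Q)"

definition unextendible_classes :: "pauli3 set set \<Rightarrow> bool" where
  "unextendible_classes F \<longleftrightarrow> (\<forall>C\<in>F. max_comm_class C) \<and>
     (\<forall>C\<in>F. \<forall>D\<in>F. C \<noteq> D \<longrightarrow> C \<inter> D = {}) \<and>
     \<not> (\<exists>D. max_comm_class D \<and> D \<subseteq> nonid_paulis - \<Union>F)"

definition onb8 :: "complex vec set \<Rightarrow> bool" where
  "onb8 B \<longleftrightarrow> card B = 8 \<and> B \<subseteq> carrier_vec 8 \<and>
     (\<forall>a\<in>B. \<forall>b\<in>B. a \<bullet>c b = (if a = b then 1 else 0))"

definition common_eigenbasis :: "pauli3 set \<Rightarrow> complex vec set \<Rightarrow> bool" where
  "common_eigenbasis S B \<longleftrightarrow> onb8 B \<and>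
     (\<forall>v\<in>B. \<forall>P\<in>S. \<exists>k. eigenvector (pauli_mat P) v k)"

definition mutually_unbiased :: "complex vec set \<Rightarrow> complex vec set \<Rightarrow> bool" where
  "mutually_unbiased B1 B2 \<longleftrightarrow> (\<forall>a\<in>B1. \<forall>b\<in>B2. cmod (a \<bullet>c b) = 1 / sqrt 8)"

definition weakly_unextendible_MUBs :: "complex vec set set \<Rightarrow> bool" where
  "weakly_unextendible_MUBs Bs \<longleftrightarrow> (\<forall>B\<in>Bs. onb8 B) \<and>
     (\<forall>B1\<in>Bs. \<forall>B2\<in>Bs. B1 \<noteq> B2 \<longrightarrow> mutually_unbiased B1 B2) \<and>
     \<not> (\<exists>D B. max_comm_class D \<and> common_eigenbasis D B \<and>
              (\<forall>B'\<in>Bs. mutually_unbiased B B'))"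

end

theory Submission
  imports Defs "HOL-Library.Product_Plus" "Jordan_Normal_Form.Determinant"
    "Jordan_Normal_Form.Schur_Decomposition"
begin

text \<open>Modulo phases the non-identity Pauli operators are the nonzero vectors of the binary symplectic
  space \<open>\<bool>\<^sup>6\<close>; two of them commute iff they are symplectically orthogonal, so a maximal commuting
  class together with the identity is a Lagrangian subspace. Symplectic maps move any two disjoint
  Lagrangians to the pure-\<open>Z\<close> and the pure-\<open>X\<close> class, and every Lagrangian avoiding the pure-\<open>Z\<close>
  class is the graph of a symmetric \<open>3 \<times> 3\<close> binary matrix; a finite check over these matrices shows
  that exactly six classes avoid four given pairwise disjoint classes, each of them meeting another
  one. For a complete set these six are the classes inside \<open>C\<^sub>1 \<union> \<dots> \<union> C\<^sub>5\<close>: the \<open>C\<^sub>i\<close> and exactly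
  one more class \<open>S\<close>, which therefore meets every \<open>C\<^sub>i\<close>, so \<open>C\<^sub>6, \<dots>, C\<^sub>9, S\<close> is unextendible.
  Common eigenbases of disjoint classes are unbiased by Parseval's identity applied to the orbit of a
  basis vector under the second class, while two classes sharing an operator never have unbiased
  eigenbases; hence unextendibility of the classes gives weak unextendibility of their bases.\<close>

fun pauli_x :: "pauli1 \<Rightarrow> bool" where
  "pauli_x PI = False" | "pauli_x PX = True" | "pauli_x PY = True" | "pauli_x PZ = False"

fun pauli_z :: "pauli1 \<Rightarrow> bool" where
  "pauli_z PI = False" | "pauli_z PX = False" | "pauli_z PY = True" | "pauli_z PZ = True"

definition pauli_of_bits :: "bool \<Rightarrow> bool \<Rightarrow> pauli1" where
  "pauli_of_bits x z = (if x then (if z then PY else PX) else (if z then PZ else PI))"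

lemma pauli_x_of_bits [simp]: "pauli_x (pauli_of_bits x z) = x"
  and pauli_z_of_bits [simp]: "pauli_z (pauli_of_bits x z) = z"
  by (auto simp: pauli_of_bits_def)

lemma pauli_of_bits_x_z [simp]: "pauli_of_bits (pauli_x p) (pauli_z p) = p"
  by (cases p) (auto simp: pauli_of_bits_def)

lemma pauli1_eqI: "pauli_x p = pauli_x q \<Longrightarrow> pauli_z p = pauli_z q \<Longrightarrow> p = q"
  by (cases p; cases q) simp_all

text \<open>Up to phase, multiplication of Pauli operators is addition of their binary (x,z) labels.\<close>

instantiation pauli1 :: ab_group_add
begin
definition "0 = PI"
definition "p + q = pauli_of_bits (pauli_x p \<noteq> pauli_x q) (pauli_z p \<noteq> pauli_z q)"
definition "- (p::pauli1) = p"
definition "p - q = pauli_of_bits (pauli_x p \<noteq> pauli_x q) (pauli_z p \<noteq> pauli_z q)"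
instance
  by standard (rule pauli1_eqI;
      auto simp: zero_pauli1_def plus_pauli1_def uminus_pauli1_def minus_pauli1_def)+
end

lemma pauli_x_add [simp]: "pauli_x (p + q) = (pauli_x p \<noteq> pauli_x q)"
  and pauli_z_add [simp]: "pauli_z (p + q) = (pauli_z p \<noteq> pauli_z q)"
  by (simp_all add: plus_pauli1_def)

lemma pauli1_zero_eq: "(0::pauli1) = PI"
  by (simp add: zero_pauli1_def)

lemma pauli3_zero_eq: "(0::pauli3) = (PI, PI, PI)"
  by (simp add: zero_prod_def pauli1_zero_eq)

lemma pauli1_add_self [simp]: "(p::pauli1) + p = 0"
  by (rule pauli1_eqI) (simp_all add: pauli1_zero_eq)

lemma pauli3_add_self [simp]: "(p::pauli3) + p = 0"
  by (cases p) (simp add: zero_prod_def)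

lemma pauli3_add_self_left [simp]: "(p::pauli3) + (p + q) = q"
  by (simp flip: add.assoc)

lemma pauli3_add_eq_0_iff: "(p::pauli3) + q = 0 \<longleftrightarrow> p = q"
  by (metis pauli3_add_self pauli3_add_self_left add.right_neutral)

lemma nonid_paulis_eq: "nonid_paulis = {P. P \<noteq> 0}"
  by (simp add: nonid_paulis_def pauli3_zero_eq)

lemma UNIV_pauli1: "(UNIV::pauli1 set) = {PI, PX, PY, PZ}"
  by (auto intro: pauli1.exhaust)

instance pauli1 :: finite
  by standard (simp add: UNIV_pauli1)

lemma card_UNIV_pauli3: "card (UNIV::pauli3 set) = 64"
  by (simp add: UNIV_pauli1 flip: UNIV_Times_UNIV)

fun pauli1_phase :: "pauli1 \<Rightarrow> pauli1 \<Rightarrow> complex" where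
  "pauli1_phase PX PY = \<i>" | "pauli1_phase PY PZ = \<i>" | "pauli1_phase PZ PX = \<i>"
| "pauli1_phase PY PX = - \<i>" | "pauli1_phase PZ PY = - \<i>" | "pauli1_phase PX PZ = - \<i>"
| "pauli1_phase _ _ = 1"

definition pauli_phase :: "pauli3 \<Rightarrow> pauli3 \<Rightarrow> complex" where
  "pauli_phase P Q = (case (P, Q) of ((a1, a2, a3), (b1, b2, b3)) \<Rightarrow>
     pauli1_phase a1 b1 * pauli1_phase a2 b2 * pauli1_phase a3 b3)"

lemma pauli1_entry_mult:
  assumes "i < 2" "j < 2"
  shows "(\<Sum>k<2. pauli1_entry a i k * pauli1_entry b k j) = pauli1_phase a b * pauli1_entry (a + b) i j"
proof -
  have "i = 0 \<or> i = 1" "j = 0 \<or> j = 1"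
    using assms by auto
  then show ?thesis
    by (cases a; cases b) (auto simp: numeral_2_eq_2 plus_pauli1_def pauli_of_bits_def zero_pauli1_def)
qed

lemma pauli_mat_carrier [simp]: "pauli_mat P \<in> carrier_mat 8 8"
  and dim_row_pauli_mat [simp]: "dim_row (pauli_mat P) = 8"
  and dim_col_pauli_mat [simp]: "dim_col (pauli_mat P) = 8"
  by (auto simp: pauli_mat_def split: prod.splits)

lemma pauli_mat_index:
  "i < 8 \<Longrightarrow> j < 8 \<Longrightarrow> pauli_mat (a1, a2, a3) $$ (i, j) =
     pauli1_entry a1 (i div 4) (j div 4) * pauli1_entry a2 ((i div 2) mod 2) ((j div 2) mod 2)
     * pauli1_entry a3 (i mod 2) (j mod 2)"
  by (simp add: pauli_mat_def)

lemma sum_lessThan_8_tensor: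
  fixes a1 a2 a3 b1 b2 b3 :: "nat \<Rightarrow> complex"
  shows "(\<Sum>k<8. (a1 (k div 4) * a2 ((k div 2) mod 2) * a3 (k mod 2))
                * (b1 (k div 4) * b2 ((k div 2) mod 2) * b3 (k mod 2)))
       = (\<Sum>k<2. a1 k * b1 k) * (\<Sum>k<2. a2 k * b2 k) * (\<Sum>k<2. a3 k * b3 k)"
proof -
  have "(\<Sum>k<8. f k) = f 0 + f 1 + f 2 + f 3 + f 4 + f 5 + f 6 + f 7"
    and "(\<Sum>k<2. g k) = g 0 + g 1" for f g :: "nat \<Rightarrow> complex"
    by (simp_all add: eval_nat_numeral)
  then show ?thesis by (simp add: algebra_simps)
qed

lemma pauli_mat_mult: "pauli_mat P * pauli_mat Q = pauli_phase P Q \<cdot>\<^sub>m pauli_mat (P + Q)"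
proof (rule eq_matI)
  fix i j assume "i < dim_row (pauli_phase P Q \<cdot>\<^sub>m pauli_mat (P + Q))"
    and "j < dim_col (pauli_phase P Q \<cdot>\<^sub>m pauli_mat (P + Q))"
  then have i: "i < 8" and j: "j < 8" by auto
  obtain a1 a2 a3 b1 b2 b3 where PQ: "P = (a1, a2, a3)" "Q = (b1, b2, b3)"
    by (cases P, cases Q) auto
  have "(pauli_mat P * pauli_mat Q) $$ (i, j) = (\<Sum>k<8. pauli_mat P $$ (i, k) * pauli_mat Q $$ (k, j))"
    using i j by (simp add: scalar_prod_def lessThan_atLeast0)
  also have "\<dots> = (\<Sum>k<8. (pauli1_entry a1 (i div 4) (k div 4)
        * pauli1_entry a2 ((i div 2) mod 2) ((k div 2) mod 2) * pauli1_entry a3 (i mod 2) (k mod 2))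
      * (pauli1_entry b1 (k div 4) (j div 4) * pauli1_entry b2 ((k div 2) mod 2) ((j div 2) mod 2)
        * pauli1_entry b3 (k mod 2) (j mod 2)))"
    using i j by (intro sum.cong) (simp_all add: PQ pauli_mat_index)
  also have "\<dots> = (\<Sum>k<2. pauli1_entry a1 (i div 4) k * pauli1_entry b1 k (j div 4))
       * (\<Sum>k<2. pauli1_entry a2 ((i div 2) mod 2) k * pauli1_entry b2 k ((j div 2) mod 2))
       * (\<Sum>k<2. pauli1_entry a3 (i mod 2) k * pauli1_entry b3 k (j mod 2))"
    by (rule sum_lessThan_8_tensor)
  also have "\<dots> = (pauli_phase P Q \<cdot>\<^sub>m pauli_mat (P + Q)) $$ (i, j)"
    using i j by (simp add: PQ pauli1_entry_mult pauli_phase_def pauli_mat_index)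
  finally show "(pauli_mat P * pauli_mat Q) $$ (i, j) = (pauli_phase P Q \<cdot>\<^sub>m pauli_mat (P + Q)) $$ (i, j)" .
qed auto

definition symp_prod1 :: "pauli1 \<Rightarrow> pauli1 \<Rightarrow> bool" where
  "symp_prod1 a b \<longleftrightarrow> (pauli_x a \<and> pauli_z b) \<noteq> (pauli_x b \<and> pauli_z a)"

definition symp_prod :: "pauli3 \<Rightarrow> pauli3 \<Rightarrow> bool" where
  "symp_prod P Q \<longleftrightarrow> (case (P, Q) of ((a1, a2, a3), (b1, b2, b3)) \<Rightarrow>
     symp_prod1 a1 b1 \<noteq> (symp_prod1 a2 b2 \<noteq> symp_prod1 a3 b3))"

lemma symp_prod_Pair:
  "symp_prod (a1, a2, a3) (b1, b2, b3) \<longleftrightarrow> symp_prod1 a1 b1 \<noteq> (symp_prod1 a2 b2 \<noteq> symp_prod1 a3 b3)"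
  by (simp add: symp_prod_def)

lemma symp_prod_commute: "symp_prod P Q = symp_prod Q P"
  by (cases P; cases Q) (auto simp: symp_prod_Pair symp_prod1_def)

lemma symp_prod_add_left: "symp_prod (P + Q) R \<longleftrightarrow> symp_prod P R \<noteq> symp_prod Q R"
proof -
  have "symp_prod1 (a + b) c \<longleftrightarrow> symp_prod1 a c \<noteq> symp_prod1 b c" for a b c
    by (auto simp: symp_prod1_def)
  then show ?thesis
    by (cases P; cases Q; cases R) (auto simp: symp_prod_Pair)
qed

lemma symp_prod_add_right: "symp_prod R (P + Q) \<longleftrightarrow> symp_prod R P \<noteq> symp_prod R Q"
  by (metis symp_prod_commute symp_prod_add_left)

lemma symp_prod_zero_left [simp]: "\<not> symp_prod 0 P"
  and symp_prod_zero_right [simp]: "\<not> symp_prod P 0"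
  by (metis add_0 symp_prod_add_left symp_prod_commute)+

lemma pauli1_phase_commute: "pauli1_phase b a = (if symp_prod1 a b then -1 else 1) * pauli1_phase a b"
  by (cases a; cases b) (simp_all add: symp_prod1_def)

lemma pauli_phase_commute: "pauli_phase Q P = (if symp_prod P Q then -1 else 1) * pauli_phase P Q"
proof -
  obtain a1 a2 a3 b1 b2 b3 where PQ: "P = (a1, a2, a3)" "Q = (b1, b2, b3)"
    by (cases P, cases Q) auto
  have "pauli_phase Q P = ((if symp_prod1 a1 b1 then -1 else 1) * pauli1_phase a1 b1)
      * ((if symp_prod1 a2 b2 then -1 else 1) * pauli1_phase a2 b2)
      * ((if symp_prod1 a3 b3 then -1 else 1) * pauli1_phase a3 b3)"
    unfolding PQ pauli_phase_def prod.case pauli1_phase_commute[where a = a1 and b = b1]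
      pauli1_phase_commute[where a = a2 and b = b2] pauli1_phase_commute[where a = a3 and b = b3] by simp
  then show ?thesis
    unfolding PQ pauli_phase_def symp_prod_Pair
    by (cases "symp_prod1 a1 b1"; cases "symp_prod1 a2 b2"; cases "symp_prod1 a3 b3") simp_all
qed

lemma pauli_phase_nonzero: "pauli_phase P Q \<noteq> 0"
proof -
  have "pauli1_phase a b \<noteq> 0" for a b
    by (cases a; cases b) simp_all
  then show ?thesis
    by (cases P; cases Q) (simp add: pauli_phase_def)
qed

lemma pauli_phase_self: "pauli_phase P P = 1"
proof -
  have "pauli1_phase a a = 1" for a
    by (cases a) simp_all
  then show ?thesis
    by (cases P) (simp add: pauli_phase_def)
qed

lemma pauli_mat_zero: "pauli_mat 0 = 1\<^sub>m 8"
proof (rule eq_matI)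
  fix i j assume "i < dim_row (1\<^sub>m 8 :: complex mat)" "j < dim_col (1\<^sub>m 8 :: complex mat)"
  then have "i < 8" "j < 8"
    by auto
  moreover have "k < 8 \<Longrightarrow> k = 0 \<or> k = 1 \<or> k = 2 \<or> k = 3 \<or> k = 4 \<or> k = 5 \<or> k = 6 \<or> k = 7"
    for k :: nat by auto
  ultimately have "i = 0 \<or> i = 1 \<or> i = 2 \<or> i = 3 \<or> i = 4 \<or> i = 5 \<or> i = 6 \<or> i = 7"
    "j = 0 \<or> j = 1 \<or> j = 2 \<or> j = 3 \<or> j = 4 \<or> j = 5 \<or> j = 6 \<or> j = 7"
    by blast+
  then show "pauli_mat 0 $$ (i, j) = 1\<^sub>m 8 $$ (i, j)"
    by (auto simp: pauli3_zero_eq pauli_mat_index)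
qed auto

lemma smult_one_mat [simp]: "(1::complex) \<cdot>\<^sub>m A = A"
  by (rule eq_matI) auto

lemma smult_smult_mat: "(c::complex) \<cdot>\<^sub>m (d \<cdot>\<^sub>m A) = (c * d) \<cdot>\<^sub>m A"
  by (rule eq_matI) auto

lemma pauli_mat_square: "pauli_mat P * pauli_mat P = 1\<^sub>m 8"
  by (simp add: pauli_mat_mult pauli_phase_self pauli_mat_zero)

lemma pauli_mat_mult_commute:
  "pauli_mat Q * pauli_mat P = (if symp_prod P Q then -1 else 1) \<cdot>\<^sub>m (pauli_mat P * pauli_mat Q)"
  using symp_prod_commute[of P Q] by (simp add: pauli_mat_mult pauli_phase_commute[of P Q] add.commute smult_smult_mat)

lemma smult_pauli_mat_cancel:
  assumes "c \<cdot>\<^sub>m pauli_mat P = d \<cdot>\<^sub>m pauli_mat P"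
  shows "c = d"
proof -
  have "(c \<cdot>\<^sub>m pauli_mat P) * pauli_mat P = (d \<cdot>\<^sub>m pauli_mat P) * pauli_mat P"
    using assms by simp
  then have "c \<cdot>\<^sub>m 1\<^sub>m 8 = d \<cdot>\<^sub>m (1\<^sub>m 8 :: complex mat)"
    by (simp add: mult_smult_assoc_mat[of _ 8 8 _ 8] pauli_mat_square)
  then have "(c \<cdot>\<^sub>m 1\<^sub>m 8) $$ (0, 0) = (d \<cdot>\<^sub>m (1\<^sub>m 8 :: complex mat)) $$ (0, 0)"
    by simp
  then show ?thesis
    by simp
qed

lemma commute_iff_not_symp_prod: "commute P Q \<longleftrightarrow> \<not> symp_prod P Q"
proof -
  have "commute P Q \<longleftrightarrow> pauli_phase P Q \<cdot>\<^sub>m pauli_mat (P + Q) = pauli_phase Q P \<cdot>\<^sub>m pauli_mat (P + Q)"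
    unfolding commute_def pauli_mat_mult by (simp add: add.commute)
  also have "\<dots> \<longleftrightarrow> pauli_phase P Q = pauli_phase Q P"
    using smult_pauli_mat_cancel[of _ "P + Q"] by auto
  also have "\<dots> \<longleftrightarrow> \<not> symp_prod P Q"
    using pauli_phase_nonzero[of P Q] symp_prod_commute[of P Q] by (auto simp: pauli_phase_commute[of P Q])
  finally show ?thesis .
qed

section \<open>Maximal commuting classes as Lagrangian subspaces\<close>

definition symp_perp :: "pauli3 set \<Rightarrow> pauli3 set" where
  "symp_perp A = {x. \<forall>a\<in>A. \<not> symp_prod x a}"

definition pauli_subgroup :: "pauli3 set \<Rightarrow> bool" where
  "pauli_subgroup H \<longleftrightarrow> 0 \<in> H \<and> (\<forall>x\<in>H. \<forall>y\<in>H. x + y \<in> H)"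

lemma pauli_subgroup_symp_perp: "pauli_subgroup (symp_perp A)"
  unfolding pauli_subgroup_def symp_perp_def by (auto simp: symp_prod_add_left)

lemma subset_symp_perp_symp_perp: "A \<subseteq> symp_perp (symp_perp A)"
  unfolding symp_perp_def using symp_prod_commute by blast

lemma symp_prod_nondegenerate:
  assumes "h \<noteq> 0"
  obtains v where "symp_prod v h"
proof -
  obtain a1 a2 a3 where h: "h = (a1, a2, a3)"
    by (cases h) auto
  define flip :: "pauli1 \<Rightarrow> pauli1" where "flip a = (if a = PX then PZ else PX)" for a
  have flip: "a \<noteq> PI \<Longrightarrow> symp_prod1 (flip a) a" for a
    by (cases a) (auto simp: flip_def symp_prod1_def)
  have PI: "\<not> symp_prod1 PI a" for a
    by (simp add: symp_prod1_def)
  have "a1 \<noteq> PI \<or> a2 \<noteq> PI \<or> a3 \<noteq> PI"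
    using assms by (auto simp: h pauli3_zero_eq)
  then have "symp_prod (flip a1, PI, PI) h \<or> symp_prod (PI, flip a2, PI) h \<or> symp_prod (PI, PI, flip a3) h"
    by (auto simp: h symp_prod_Pair flip PI)
  then show ?thesis
    using that by blast
qed

definition bool_sign :: "bool \<Rightarrow> int" where
  "bool_sign b = (if b then -1 else 1)"

text \<open>Character sums: translating by an element \<open>c\<close> with \<open>symp_prod c h\<close> flips every sign.\<close>

lemma sum_bool_sign_symp_prod_UNIV: "(\<Sum>v\<in>UNIV. bool_sign (symp_prod v h)) = (if h = 0 then 64 else 0)"
proof (cases "h = 0")
  case True
  then show ?thesis
    by (simp add: bool_sign_def card_UNIV_pauli3)
next
  case False
  then obtain c where c: "symp_prod c h"
    by (rule symp_prod_nondegenerate)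
  have "bij (\<lambda>v::pauli3. v + c)"
    by (rule bij_betwI[where g = "\<lambda>v. v + c"]) (auto simp: add.assoc)
  then have "(\<Sum>v\<in>UNIV. bool_sign (symp_prod v h)) = (\<Sum>v\<in>UNIV. bool_sign (symp_prod (v + c) h))"
    using sum.reindex_bij_betw[of "\<lambda>v. v + c" UNIV UNIV "\<lambda>v. bool_sign (symp_prod v h)"] by simp
  also have "\<dots> = (\<Sum>v\<in>UNIV. - bool_sign (symp_prod v h))"
    using c by (intro sum.cong) (auto simp: symp_prod_add_left bool_sign_def)
  also have "\<dots> = - (\<Sum>v\<in>UNIV. bool_sign (symp_prod v h))"
    by (simp add: sum_negf)
  finally show ?thesis
    using False by simp
qed

lemma sum_bool_sign_symp_prod_subgroup:
  assumes H: "pauli_subgroup H"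
  shows "(\<Sum>h\<in>H. bool_sign (symp_prod v h)) = (if v \<in> symp_perp H then int (card H) else 0)"
proof (cases "v \<in> symp_perp H")
  case True
  then show ?thesis
    by (simp add: symp_perp_def bool_sign_def)
next
  case False
  then obtain c where c: "c \<in> H" "symp_prod v c"
    unfolding symp_perp_def by auto
  have "bij_betw (\<lambda>h. h + c) H H"
    by (rule bij_betwI[where g = "\<lambda>h. h + c"]) (use H c in \<open>auto simp: pauli_subgroup_def add.assoc\<close>)
  then have "(\<Sum>h\<in>H. bool_sign (symp_prod v h)) = (\<Sum>h\<in>H. bool_sign (symp_prod v (h + c)))"
    using sum.reindex_bij_betw[of "\<lambda>h. h + c" H H "\<lambda>h. bool_sign (symp_prod v h)"] by simp
  also have "\<dots> = (\<Sum>h\<in>H. - bool_sign (symp_prod v h))"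
    using c by (intro sum.cong) (auto simp: symp_prod_add_right bool_sign_def)
  also have "\<dots> = - (\<Sum>h\<in>H. bool_sign (symp_prod v h))"
    by (simp add: sum_negf)
  finally show ?thesis
    using False by simp
qed

lemma card_mult_card_symp_perp:
  assumes H: "pauli_subgroup H"
  shows "card H * card (symp_perp H) = 64"
proof -
  have "int (card H) * int (card (symp_perp H)) = (\<Sum>v\<in>UNIV. if v \<in> symp_perp H then int (card H) else 0)"
    by (simp add: sum.If_cases)
  also have "\<dots> = (\<Sum>v\<in>UNIV. \<Sum>h\<in>H. bool_sign (symp_prod v h))"
    using sum_bool_sign_symp_prod_subgroup[OF H] by simp
  also have "\<dots> = (\<Sum>h\<in>H. \<Sum>v\<in>UNIV. bool_sign (symp_prod v h))"
    by (rule sum.swap)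
  also have "\<dots> = 64"
    using H by (simp add: sum_bool_sign_symp_prod_UNIV pauli_subgroup_def)
  finally show ?thesis
    by (metis of_nat_eq_iff of_nat_mult of_nat_numeral)
qed

lemma max_comm_class_iff:
  "max_comm_class S \<longleftrightarrow> 0 \<notin> S \<and> card S = 7 \<and> (\<forall>P\<in>S. \<forall>Q\<in>S. \<not> symp_prod P Q)"
  by (auto simp: max_comm_class_def nonid_paulis_eq commute_iff_not_symp_prod)

text \<open>Since \<open>|H| |H\<^sup>\<perp>| = 64\<close>, an isotropic subgroup of order 8 is its own orthogonal complement.\<close>

lemma symp_perp_max_comm_class:
  assumes "max_comm_class S"
  shows "symp_perp S = insert 0 S"
proof -
  have S: "0 \<notin> S" "card S = 7" "\<forall>P\<in>S. \<forall>Q\<in>S. \<not> symp_prod P Q"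
    using assms by (simp_all add: max_comm_class_iff)
  have card: "card (insert 0 S) = 8"
    using S by simp
  have sub: "insert 0 S \<subseteq> symp_perp S"
    using S(3) by (auto simp: symp_perp_def)
  moreover have "insert 0 S \<subseteq> symp_perp (symp_perp S)"
    using subset_symp_perp_symp_perp[of S] by (auto simp: symp_perp_def)
  ultimately have ge: "8 \<le> card (symp_perp S)" "8 \<le> card (symp_perp (symp_perp S))"
    using card by (metis card_mono finite)+
  have "card (symp_perp S) \<le> 8"
  proof (rule ccontr)
    assume "\<not> card (symp_perp S) \<le> 8"
    then have "9 * 8 \<le> card (symp_perp S) * card (symp_perp (symp_perp S))"
      using ge by (intro mult_le_mono) auto
    then show False
      using card_mult_card_symp_perp[OF pauli_subgroup_symp_perp, of S] by simp
  qed
  then have "card (symp_perp S) = 8"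
    using ge by simp
  then show ?thesis
    using card_subset_eq[OF finite sub] card by simp
qed

lemma pauli_subgroup_max_comm_class:
  assumes "max_comm_class S"
  shows "pauli_subgroup (insert 0 S)"
  using pauli_subgroup_symp_perp symp_perp_max_comm_class[OF assms] by metis

lemma isotropic_max_comm_class:
  assumes "max_comm_class S" "P \<in> insert 0 S" "Q \<in> insert 0 S"
  shows "\<not> symp_prod P Q"
  using assms symp_perp_max_comm_class[OF assms(1)] by (auto simp: symp_perp_def)

type_synonym bvec = "bool \<times> bool \<times> bool"

definition bvec_zero :: bvec where
  "bvec_zero = (False, False, False)"

fun bvec_add :: "bvec \<Rightarrow> bvec \<Rightarrow> bvec" where
  "bvec_add (a, b, c) (a', b', c') = (a \<noteq> a', b \<noteq> b', c \<noteq> c')"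

fun bvec_dot :: "bvec \<Rightarrow> bvec \<Rightarrow> bool" where
  "bvec_dot (x1, x2, x3) (z1, z2, z3) \<longleftrightarrow> (x1 \<and> z1) \<noteq> ((x2 \<and> z2) \<noteq> (x3 \<and> z3))"

lemma bvec_add_self [simp]: "bvec_add x x = bvec_zero"
  by (cases x) (simp add: bvec_zero_def)

lemma bvec_add_zero [simp]: "bvec_add x bvec_zero = x" "bvec_add bvec_zero x = x"
  by (cases x; simp add: bvec_zero_def)+

lemma bvec_dot_zero_right [simp]: "\<not> bvec_dot x bvec_zero"
  by (cases x rule: prod_cases3) (simp add: bvec_zero_def)

lemma bvec_add_eq_zero_iff: "bvec_add x y = bvec_zero \<longleftrightarrow> x = y"
  by (cases x; cases y) (auto simp: bvec_zero_def)

lemma all_bvec: "(\<forall>x::bvec. P x) \<longleftrightarrow> P (False, False, False) \<and> P (False, False, True) \<and>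
    P (False, True, False) \<and> P (False, True, True) \<and> P (True, False, False) \<and> P (True, False, True) \<and>
    P (True, True, False) \<and> P (True, True, True)"
  by (metis (full_types) prod_cases3)

lemma card_UNIV_bvec: "card (UNIV :: bvec set) = 8"
  by (simp add: card_UNIV_bool flip: UNIV_Times_UNIV)

definition x_bits :: "pauli3 \<Rightarrow> bvec" where
  "x_bits P = (case P of (a1, a2, a3) \<Rightarrow> (pauli_x a1, pauli_x a2, pauli_x a3))"

definition z_bits :: "pauli3 \<Rightarrow> bvec" where
  "z_bits P = (case P of (a1, a2, a3) \<Rightarrow> (pauli_z a1, pauli_z a2, pauli_z a3))"

fun pauli3_of_bits :: "bvec \<Rightarrow> bvec \<Rightarrow> pauli3" where
  "pauli3_of_bits (x1, x2, x3) (z1, z2, z3) = (pauli_of_bits x1 z1, pauli_of_bits x2 z2, pauli_of_bits x3 z3)"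

lemma x_bits_pauli3_of_bits [simp]: "x_bits (pauli3_of_bits x z) = x"
  and z_bits_pauli3_of_bits [simp]: "z_bits (pauli3_of_bits x z) = z"
  by (cases x; cases z; simp add: x_bits_def z_bits_def)+

lemma pauli3_of_bits_x_z_bits [simp]: "pauli3_of_bits (x_bits P) (z_bits P) = P"
  by (cases P) (simp add: x_bits_def z_bits_def)

lemma pauli3_eq_iff_bits: "P = Q \<longleftrightarrow> x_bits P = x_bits Q \<and> z_bits P = z_bits Q"
  by (metis pauli3_of_bits_x_z_bits)

lemma x_bits_add [simp]: "x_bits (P + Q) = bvec_add (x_bits P) (x_bits Q)"
  and z_bits_add [simp]: "z_bits (P + Q) = bvec_add (z_bits P) (z_bits Q)"
  by (cases P; cases Q; simp add: x_bits_def z_bits_def)+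

lemma x_bits_zero [simp]: "x_bits 0 = bvec_zero"
  and z_bits_zero [simp]: "z_bits 0 = bvec_zero"
  by (simp_all add: x_bits_def z_bits_def pauli3_zero_eq bvec_zero_def)

lemma pauli3_eq_0_iff_bits: "P = 0 \<longleftrightarrow> x_bits P = bvec_zero \<and> z_bits P = bvec_zero"
  by (metis pauli3_eq_iff_bits x_bits_zero z_bits_zero)

lemma symp_prod_bits: "symp_prod P Q \<longleftrightarrow> bvec_dot (x_bits P) (z_bits Q) \<noteq> bvec_dot (x_bits Q) (z_bits P)"
  by (cases P; cases Q) (auto simp: symp_prod_Pair symp_prod1_def x_bits_def z_bits_def)

section \<open>Graphs of symmetric binary matrices\<close>

text \<open>\<open>(a, b, c, d, e, f)\<close> stands for the symmetric matrix with rows \<open>(a, b, c)\<close>, \<open>(b, d, e)\<close>, \<open>(c, e, f)\<close>.\<close>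

type_synonym symmat = "bool \<times> bool \<times> bool \<times> bool \<times> bool \<times> bool"

fun symmat_apply :: "symmat \<Rightarrow> bvec \<Rightarrow> bvec" where
  "symmat_apply (a, b, c, d, e, f) (x1, x2, x3) =
     ((a \<and> x1) \<noteq> ((b \<and> x2) \<noteq> (c \<and> x3)),
      (b \<and> x1) \<noteq> ((d \<and> x2) \<noteq> (e \<and> x3)),
      (c \<and> x1) \<noteq> ((e \<and> x2) \<noteq> (f \<and> x3)))"

fun symmat_det :: "symmat \<Rightarrow> bool" where
  "symmat_det (a, b, c, d, e, f) \<longleftrightarrow> (a \<and> d \<and> f) \<noteq> ((a \<and> e) \<noteq> ((b \<and> f) \<noteq> (c \<and> d)))"

fun symmat_add :: "symmat \<Rightarrow> symmat \<Rightarrow> symmat" where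
  "symmat_add (a, b, c, d, e, f) (a', b', c', d', e', f') =
     (a \<noteq> a', b \<noteq> b', c \<noteq> c', d \<noteq> d', e \<noteq> e', f \<noteq> f')"

lemma symmat_apply_symmat_add:
  "symmat_apply (symmat_add T T') x = bvec_add (symmat_apply T x) (symmat_apply T' x)"
  by (cases T; cases T'; cases x) auto

lemma symmat_apply_bvec_add:
  "symmat_apply T (bvec_add x y) = bvec_add (symmat_apply T x) (symmat_apply T y)"
  by (cases T; cases x; cases y) auto

lemma symmat_apply_zero [simp]: "symmat_apply T bvec_zero = bvec_zero"
  by (cases T) (simp add: bvec_zero_def)

lemma bvec_dot_symmat_apply_commute: "bvec_dot x (symmat_apply T y) = bvec_dot y (symmat_apply T x)"
proof -
  obtain a b c d e f where T: "T = (a, b, c, d, e, f)"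
    by (cases T) auto
  obtain x1 x2 x3 y1 y2 y3 where xy: "x = (x1, x2, x3)" "y = (y1, y2, y3)"
    by (cases x, cases y) auto
  show ?thesis
    unfolding T xy by (cases x1; cases x2; cases x3; cases y1; cases y2; cases y3; simp; argo)
qed

lemma symmat_add_commute: "symmat_add T T' = symmat_add T' T"
  by (cases T; cases T') auto

definition symmat_zero :: symmat where
  "symmat_zero = (False, False, False, False, False, False)"

lemma symmat_apply_symmat_zero [simp]: "symmat_apply symmat_zero x = bvec_zero"
  by (cases x) (simp add: symmat_zero_def bvec_zero_def)

lemma symmat_add_symmat_zero [simp]: "symmat_add T symmat_zero = T"
  by (cases T) (simp add: symmat_zero_def)

lemma symmat_det_iff_nonsingular: "symmat_det T \<longleftrightarrow> (\<forall>x. x \<noteq> bvec_zero \<longrightarrow> symmat_apply T x \<noteq> bvec_zero)"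
proof -
  obtain a b c d e f where T: "T = (a, b, c, d, e, f)"
    by (cases T) auto
  show ?thesis
    unfolding T all_bvec by (cases a; cases b; cases c; cases d; cases e; cases f) (simp_all add: bvec_zero_def)
qed

lemma symmat_eqI:
  assumes "\<And>x. symmat_apply T x = symmat_apply T' x"
  shows "T = T'"
  using assms[of "(True, False, False)"] assms[of "(False, True, False)"] assms[of "(False, False, True)"]
  by (cases T; cases T') simp

lemma bvec_linear_eqI:
  assumes f: "\<And>x y. f (bvec_add x y) = bvec_add (f x) (f y)"
    and g: "\<And>x y. g (bvec_add x y) = bvec_add (g x) (g y)"
    and "f (True, False, False) = g (True, False, False)" "f (False, True, False) = g (False, True, False)"
      "f (False, False, True) = g (False, False, True)"
  shows "f x = g x"
proof -
  have "f bvec_zero = bvec_zero" "g bvec_zero = bvec_zero"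
    using f[of bvec_zero bvec_zero] g[of bvec_zero bvec_zero] by simp_all
  moreover have "(True, True, False) = bvec_add (True, False, False) (False, True, False)"
    "(True, False, True) = bvec_add (True, False, False) (False, False, True)"
    "(False, True, True) = bvec_add (False, True, False) (False, False, True)"
    "(True, True, True) = bvec_add (bvec_add (True, False, False) (False, True, False)) (False, False, True)"
    by simp_all
  ultimately have "\<forall>x. f x = g x"
    unfolding all_bvec using assms by (simp only: f g bvec_zero_def[symmetric])
  then show ?thesis ..
qed

lemma symmetric_linear_map_eq_symmat_apply:
  assumes add: "\<And>x y. \<tau> (bvec_add x y) = bvec_add (\<tau> x) (\<tau> y)"
    and sym: "\<And>x y. bvec_dot x (\<tau> y) = bvec_dot y (\<tau> x)"
  obtains T where "\<And>x. \<tau> x = symmat_apply T x"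
proof -
  obtain a b c where e1: "\<tau> (True, False, False) = (a, b, c)"
    by (metis prod_cases3)
  obtain b' d e where e2: "\<tau> (False, True, False) = (b', d, e)"
    by (metis prod_cases3)
  obtain c' e' f where e3: "\<tau> (False, False, True) = (c', e', f)"
    by (metis prod_cases3)
  have "b' = b" "c' = c" "e' = e"
    using sym[of "(True, False, False)" "(False, True, False)"] sym[of "(True, False, False)" "(False, False, True)"]
      sym[of "(False, True, False)" "(False, False, True)"] e1 e2 e3 by simp_all
  then have "\<tau> (True, False, False) = symmat_apply (a, b, c, d, e, f) (True, False, False)"
    "\<tau> (False, True, False) = symmat_apply (a, b, c, d, e, f) (False, True, False)"
    "\<tau> (False, False, True) = symmat_apply (a, b, c, d, e, f) (False, False, True)"
    using e1 e2 e3 by simp_all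
  then have "\<tau> x = symmat_apply (a, b, c, d, e, f) x" for x
    by (rule bvec_linear_eqI[OF add symmat_apply_bvec_add])
  then show ?thesis
    using that by blast
qed

definition graph_class :: "symmat \<Rightarrow> pauli3 set" where
  "graph_class T = (\<lambda>x. pauli3_of_bits x (symmat_apply T x)) ` (UNIV - {bvec_zero})"

definition x_class :: "pauli3 set" where
  "x_class = {P. P \<noteq> 0 \<and> z_bits P = bvec_zero}"

definition z_class :: "pauli3 set" where
  "z_class = {P. P \<noteq> 0 \<and> x_bits P = bvec_zero}"

lemma mem_graph_class: "P \<in> graph_class T \<longleftrightarrow> x_bits P \<noteq> bvec_zero \<and> z_bits P = symmat_apply T (x_bits P)"
  unfolding graph_class_def by (auto simp: pauli3_eq_iff_bits)

lemma x_class_eq_graph_class: "x_class = graph_class symmat_zero"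
  unfolding set_eq_iff x_class_def mem_graph_class by (simp add: pauli3_eq_0_iff_bits) blast

lemma max_comm_class_graph_class: "max_comm_class (graph_class T)"
proof -
  have "inj_on (\<lambda>x. pauli3_of_bits x (symmat_apply T x)) (UNIV - {bvec_zero})"
    by (rule inj_onI) (metis x_bits_pauli3_of_bits)
  then have "card (graph_class T) = 7"
    unfolding graph_class_def by (simp add: card_image card_UNIV_bvec)
  moreover have "0 \<notin> graph_class T"
    by (simp add: mem_graph_class)
  ultimately show ?thesis
    by (auto simp: max_comm_class_iff mem_graph_class symp_prod_bits bvec_dot_symmat_apply_commute)
qed

lemma graph_class_Int_z_class: "graph_class T \<inter> z_class = {}"
  by (auto simp: mem_graph_class z_class_def)

lemma graph_class_Int_eq_empty_iff: "graph_class T \<inter> graph_class T' = {} \<longleftrightarrow> symmat_det (symmat_add T T')"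
proof -
  have "graph_class T \<inter> graph_class T' = {} \<longleftrightarrow>
      (\<forall>x. x \<noteq> bvec_zero \<longrightarrow> symmat_apply T x \<noteq> symmat_apply T' x)"
  proof
    assume empty: "graph_class T \<inter> graph_class T' = {}"
    show "\<forall>x. x \<noteq> bvec_zero \<longrightarrow> symmat_apply T x \<noteq> symmat_apply T' x"
    proof (intro allI impI notI)
      fix x assume "x \<noteq> bvec_zero" "symmat_apply T x = symmat_apply T' x"
      then have "pauli3_of_bits x (symmat_apply T x) \<in> graph_class T \<inter> graph_class T'"
        by (simp add: mem_graph_class)
      then show False
        using empty by blast
    qed
  next
    assume H: "\<forall>x. x \<noteq> bvec_zero \<longrightarrow> symmat_apply T x \<noteq> symmat_apply T' x"
    show "graph_class T \<inter> graph_class T' = {}"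
    proof (rule equals0I)
      fix P assume "P \<in> graph_class T \<inter> graph_class T'"
      then have "x_bits P \<noteq> bvec_zero" "symmat_apply T (x_bits P) = symmat_apply T' (x_bits P)"
        unfolding Int_iff mem_graph_class by metis+
      then show False
        using H by blast
    qed
  qed
  then show ?thesis
    by (simp add: symmat_det_iff_nonsingular symmat_apply_symmat_add bvec_add_eq_zero_iff)
qed

lemma graph_class_Int_x_class_eq_empty_iff: "graph_class T \<inter> x_class = {} \<longleftrightarrow> symmat_det T"
  by (simp add: x_class_eq_graph_class graph_class_Int_eq_empty_iff)

lemma inj_graph_class: "inj graph_class"
proof (rule injI)
  fix T T' assume eq: "graph_class T = graph_class T'"
  have "symmat_apply T x = symmat_apply T' x" for x
  proof (cases "x = bvec_zero")
    case False
    then have "pauli3_of_bits x (symmat_apply T x) \<in> graph_class T"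
      by (simp add: mem_graph_class)
    then have "pauli3_of_bits x (symmat_apply T x) \<in> graph_class T'"
      by (simp add: eq)
    then show ?thesis
      by (simp add: mem_graph_class)
  qed simp
  then show "T = T'"
    by (rule symmat_eqI)
qed

text \<open>A maximal commuting class meeting no pure-\<open>Z\<close> operator is the graph of the map sending the
  \<open>X\<close>-part of each of its elements to the \<open>Z\<close>-part; isotropy makes this map symmetric.\<close>

lemma max_comm_class_graph_map:
  assumes D: "max_comm_class D" and Z: "D \<inter> z_class = {}"
  obtains \<tau> where "\<And>x y. \<tau> (bvec_add x y) = bvec_add (\<tau> x) (\<tau> y)"
    "\<And>x y. bvec_dot x (\<tau> y) = bvec_dot y (\<tau> x)"
    "\<And>P. P \<in> insert 0 D \<longleftrightarrow> z_bits P = \<tau> (x_bits P)"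
proof -
  define M where "M = insert 0 D"
  have M: "pauli_subgroup M" "\<And>P Q. P \<in> M \<Longrightarrow> Q \<in> M \<Longrightarrow> \<not> symp_prod P Q"
    unfolding M_def using D by (simp_all add: pauli_subgroup_max_comm_class isotropic_max_comm_class)
  have "inj_on x_bits M"
  proof (rule inj_onI)
    fix P Q assume "P \<in> M" "Q \<in> M" "x_bits P = x_bits Q"
    then have "P + Q \<in> M" "x_bits (P + Q) = bvec_zero"
      using M(1) by (simp_all add: pauli_subgroup_def)
    then show "P = Q"
      using Z by (auto simp: M_def z_class_def pauli3_add_eq_0_iff)
  qed
  moreover have "card M = 8"
    using D by (simp add: M_def max_comm_class_iff)
  ultimately have bij: "bij_betw x_bits M UNIV"
    by (simp add: bij_betw_def card_UNIV_bvec card_image card_subset_eq)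
  define \<tau> where "\<tau> x = z_bits (the_inv_into M x_bits x)" for x
  have inv: "the_inv_into M x_bits x \<in> M" "x_bits (the_inv_into M x_bits x) = x" for x
    using bij by (simp_all add: bij_betw_def the_inv_into_into f_the_inv_into_f)
  have mem: "P \<in> M \<longleftrightarrow> z_bits P = \<tau> (x_bits P)" for P
  proof
    assume "P \<in> M"
    then show "z_bits P = \<tau> (x_bits P)"
      using bij by (simp add: \<tau>_def bij_betw_def the_inv_into_f_f)
  next
    assume "z_bits P = \<tau> (x_bits P)"
    then have "P = the_inv_into M x_bits (x_bits P)"
      using inv by (simp add: \<tau>_def pauli3_eq_iff_bits)
    then show "P \<in> M"
      using inv by metis
  qed
  have add: "\<tau> (bvec_add x y) = bvec_add (\<tau> x) (\<tau> y)" for x y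
  proof -
    have "the_inv_into M x_bits x + the_inv_into M x_bits y \<in> M"
      using M(1) inv by (simp add: pauli_subgroup_def)
    then show ?thesis
      using mem inv by (simp add: \<tau>_def)
  qed
  have sym: "bvec_dot x (\<tau> y) = bvec_dot y (\<tau> x)" for x y
    using M(2)[OF inv(1) inv(1)] inv(2) by (simp add: \<tau>_def symp_prod_bits)
  show ?thesis
    by (rule that[OF add sym mem[unfolded M_def]])
qed

lemma max_comm_class_eq_graph_class:
  assumes D: "max_comm_class D" and Z: "D \<inter> z_class = {}"
  obtains T where "D = graph_class T"
proof -
  obtain \<tau> where add: "\<And>x y. \<tau> (bvec_add x y) = bvec_add (\<tau> x) (\<tau> y)"
    and sym: "\<And>x y. bvec_dot x (\<tau> y) = bvec_dot y (\<tau> x)"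
    and mem: "\<And>P. P \<in> insert 0 D \<longleftrightarrow> z_bits P = \<tau> (x_bits P)"
    using max_comm_class_graph_map[OF D Z] by blast
  obtain T where T: "\<And>x. \<tau> x = symmat_apply T x"
    using symmetric_linear_map_eq_symmat_apply[OF add sym] by blast
  have "0 \<notin> D"
    using D by (simp add: max_comm_class_iff)
  then have "P \<in> D \<longleftrightarrow> P \<noteq> 0 \<and> z_bits P = symmat_apply T (x_bits P)" for P
    using mem[of P] T by auto
  then have "D = {P. P \<noteq> 0 \<and> z_bits P = symmat_apply T (x_bits P)}"
    by blast
  also have "\<dots> = graph_class T"
    by (auto simp: mem_graph_class pauli3_eq_0_iff_bits)
  finally show ?thesis
    using that by blast
qed

section \<open>Symplectic maps\<close>

declare split_paired_All [simp del] split_paired_Ex [simp del]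

definition symplectic_map :: "(pauli3 \<Rightarrow> pauli3) \<Rightarrow> bool" where
  "symplectic_map \<phi> \<longleftrightarrow> (\<forall>P Q. \<phi> (P + Q) = \<phi> P + \<phi> Q) \<and> (\<forall>P Q. symp_prod (\<phi> P) (\<phi> Q) = symp_prod P Q)"

lemma symplectic_mapD:
  assumes "symplectic_map \<phi>"
  shows "\<phi> (P + Q) = \<phi> P + \<phi> Q" "symp_prod (\<phi> P) (\<phi> Q) = symp_prod P Q"
  using assms by (simp_all add: symplectic_map_def)

lemma symplectic_map_bij:
  assumes "symplectic_map \<phi>"
  shows "bij \<phi>"
proof -
  have "inj \<phi>"
  proof (rule injI)
    fix P Q assume "\<phi> P = \<phi> Q"
    then have "\<not> symp_prod R (P + Q)" for R
      using symplectic_mapD[OF assms] by (metis pauli3_add_self symp_prod_zero_right symp_prod_add_right)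
    then show "P = Q"
      by (metis symp_prod_nondegenerate pauli3_add_eq_0_iff)
  qed
  then show ?thesis
    by (simp add: bij_def finite_UNIV_inj_surj)
qed

lemma symplectic_map_zero:
  assumes "symplectic_map \<phi>"
  shows "\<phi> 0 = 0"
  using symplectic_mapD(1)[OF assms, of 0 0] by (simp add: pauli3_add_eq_0_iff)

lemma max_comm_class_image_iff:
  assumes \<phi>: "symplectic_map \<phi>"
  shows "max_comm_class (\<phi> ` D) \<longleftrightarrow> max_comm_class D"
proof -
  have inj: "inj \<phi>"
    using symplectic_map_bij[OF \<phi>] by (rule bij_is_inj)
  then have "0 \<in> \<phi> ` D \<longleftrightarrow> 0 \<in> D"
    by (metis symplectic_map_zero[OF \<phi>] inj_image_mem_iff)
  moreover have "card (\<phi> ` D) = card D"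
    using inj by (simp add: card_image inj_on_subset)
  ultimately show ?thesis
    by (simp add: max_comm_class_iff symplectic_mapD[OF \<phi>])
qed

definition classes_avoiding :: "pauli3 set set \<Rightarrow> pauli3 set set" where
  "classes_avoiding F = {D. max_comm_class D \<and> (\<forall>A\<in>F. D \<inter> A = {})}"

lemma classes_avoiding_image:
  assumes \<phi>: "symplectic_map \<phi>"
  shows "classes_avoiding (image \<phi> ` F) = image \<phi> ` classes_avoiding F"
proof -
  have bij: "bij \<phi>"
    by (rule symplectic_map_bij[OF \<phi>])
  have Int: "\<phi> ` X \<inter> \<phi> ` Y = {} \<longleftrightarrow> X \<inter> Y = {}" for X Y
    using bij by (simp add: bij_def image_Int[symmetric])
  show ?thesis
  proof (intro subset_antisym subsetI)
    fix D assume D: "D \<in> classes_avoiding (image \<phi> ` F)"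
    have "D = \<phi> ` (\<phi> -` D)"
      using bij by (simp add: bij_def surj_image_vimage_eq)
    moreover have "\<phi> -` D \<in> classes_avoiding F"
      using D Int[of "\<phi> -` D"] max_comm_class_image_iff[OF \<phi>, of "\<phi> -` D"] \<open>D = \<phi> ` (\<phi> -` D)\<close>
      by (auto simp: classes_avoiding_def)
    ultimately show "D \<in> image \<phi> ` classes_avoiding F"
      by blast
  next
    fix D assume "D \<in> image \<phi> ` classes_avoiding F"
    then obtain E where "D = \<phi> ` E" "E \<in> classes_avoiding F"
      by blast
    then show "D \<in> classes_avoiding (image \<phi> ` F)"
      by (simp add: classes_avoiding_def max_comm_class_image_iff[OF \<phi>] Int)
  qed
qed

fun lin_comb :: "bvec \<Rightarrow> pauli3 \<times> pauli3 \<times> pauli3 \<Rightarrow> pauli3" where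
  "lin_comb (x1, x2, x3) (e1, e2, e3) = (if x1 then e1 else 0) + (if x2 then e2 else 0) + (if x3 then e3 else 0)"

lemma lin_comb_zero [simp]: "lin_comb bvec_zero E = 0"
  by (cases E rule: prod_cases3) (simp add: bvec_zero_def)

lemma lin_comb_bvec_add: "lin_comb (bvec_add x y) E = lin_comb x E + lin_comb y E"
proof -
  obtain e1 e2 e3 x1 x2 x3 y1 y2 y3 where "E = (e1, e2, e3)" "x = (x1, x2, x3)" "y = (y1, y2, y3)"
    by (metis prod_cases3)
  then show ?thesis
    by (cases x1; cases x2; cases x3; cases y1; cases y2; cases y3) (simp_all add: ac_simps)
qed

lemma symp_prod_lin_comb_left:
  "symp_prod (lin_comb x (e1, e2, e3)) Q = bvec_dot x (symp_prod e1 Q, symp_prod e2 Q, symp_prod e3 Q)"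
  by (cases x) (auto simp: symp_prod_add_left)

lemma lin_comb_mem:
  assumes "pauli_subgroup M" "e1 \<in> M" "e2 \<in> M" "e3 \<in> M"
  shows "lin_comb x (e1, e2, e3) \<in> M"
  using assms by (cases x) (auto simp: pauli_subgroup_def)

lemma bij_betw_bvec_card:
  fixes f :: "bvec \<Rightarrow> 'a"
  assumes "inj f" "range f \<subseteq> M" "card M = 8"
  shows "bij_betw f UNIV M"
proof -
  have "card (range f) = card M"
    using assms by (simp add: card_image card_UNIV_bvec)
  moreover have "finite M"
    using assms(3) by (metis card.infinite zero_neq_numeral)
  ultimately have "range f = M"
    using card_subset_eq[OF _ assms(2)] by simp
  then show ?thesis
    using assms(1) by (simp add: bij_betw_def)
qed

lemma max_comm_class_basis:
  assumes A: "max_comm_class A"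
  obtains E where "bij_betw (\<lambda>x. lin_comb x E) UNIV (insert 0 A)"
proof -
  have A7: "card A = 7" and "0 \<notin> A"
    using A by (simp_all add: max_comm_class_iff)
  then obtain e1 where e1: "e1 \<in> A"
    by (metis card.empty ex_in_conv zero_neq_numeral)
  have "card (A - {e1}) = 6"
    using e1 A7 by simp
  then obtain e2 where e2: "e2 \<in> A" "e2 \<noteq> e1"
    by (metis Diff_iff card.empty empty_iff insertI1 zero_neq_numeral ex_in_conv)
  have "card {e1, e2, e1 + e2} \<le> 3"
    by (simp add: card_insert_if)
  then have "card (A - {e1, e2, e1 + e2}) \<ge> 4"
    using A7 diff_card_le_card_Diff[of "{e1, e2, e1 + e2}" A] by simp
  then obtain e3 where e3: "e3 \<in> A" "e3 \<notin> {e1, e2, e1 + e2}"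
    by (metis all_not_in_conv card.empty Diff_iff not_numeral_le_zero)
  let ?E = "(e1, e2, e3)"
  have "e1 \<noteq> 0" "e2 \<noteq> 0" "e3 \<noteq> 0" "e1 + e2 \<noteq> 0" "e1 + e3 \<noteq> 0" "e2 + e3 \<noteq> 0" "e1 + e2 + e3 \<noteq> 0"
    using e1 e2 e3 \<open>0 \<notin> A\<close> by (auto simp: pauli3_add_eq_0_iff)
  then have "lin_comb x ?E = 0 \<Longrightarrow> x = bvec_zero" for x
    by (cases x rule: prod_cases3) (auto simp: bvec_zero_def split: if_splits)
  then have "inj (\<lambda>x. lin_comb x ?E)"
    by (intro injI) (metis lin_comb_bvec_add pauli3_add_eq_0_iff bvec_add_eq_zero_iff)
  moreover have "range (\<lambda>x. lin_comb x ?E) \<subseteq> insert 0 A"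
    using lin_comb_mem[OF pauli_subgroup_max_comm_class[OF A]] e1 e2 e3 by blast
  moreover have "card (insert 0 A) = 8"
    using A7 \<open>0 \<notin> A\<close> by simp
  ultimately show ?thesis
    using that bij_betw_bvec_card by blast
qed

text \<open>The dual basis is read off through the map \<open>Q \<mapsto> (symp_prod e\<^sub>1 Q, symp_prod e\<^sub>2 Q, symp_prod e\<^sub>3 Q)\<close>,
  which is injective on the second class because the two Lagrangians meet only in 0.\<close>

lemma dual_basis:
  assumes A1: "max_comm_class A1" and A2: "max_comm_class A2" and disj: "A1 \<inter> A2 = {}"
    and E: "bij_betw (\<lambda>x. lin_comb x E) UNIV (insert 0 A2)"
  obtains F where "bij_betw (\<lambda>z. lin_comb z F) UNIV (insert 0 A1)"
    "\<And>x z. symp_prod (lin_comb x E) (lin_comb z F) = bvec_dot x z"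
proof -
  obtain e1 e2 e3 where E_eq: "E = (e1, e2, e3)"
    by (cases E rule: prod_cases3)
  define M1 where "M1 = insert 0 A1"
  have M1: "pauli_subgroup M1" "card M1 = 8"
    using A1 by (simp_all add: M1_def pauli_subgroup_max_comm_class max_comm_class_iff)
  define coords where "coords Q = (symp_prod e1 Q, symp_prod e2 Q, symp_prod e3 Q)" for Q
  have symp_coords: "symp_prod (lin_comb x E) Q = bvec_dot x (coords Q)" for x Q
    by (simp add: E_eq coords_def symp_prod_lin_comb_left)
  have coords_add: "coords (P + Q) = bvec_add (coords P) (coords Q)" for P Q
    by (simp add: coords_def symp_prod_add_right)
  have "inj_on coords M1"
  proof (rule inj_onI)
    fix P Q assume PQ: "P \<in> M1" "Q \<in> M1" "coords P = coords Q"
    have "\<not> symp_prod a (P + Q)" if "a \<in> A2" for a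
    proof -
      have "a \<in> range (\<lambda>x. lin_comb x E)"
        using E that by (simp add: bij_betw_def)
      then obtain x where "a = lin_comb x E"
        by blast
      then show ?thesis
        using PQ(3) by (simp add: symp_coords coords_add)
    qed
    then have "P + Q \<in> insert 0 A2"
      using symp_perp_max_comm_class[OF A2] by (auto simp: symp_perp_def symp_prod_commute)
    moreover have "P + Q \<in> M1"
      using M1(1) PQ by (simp add: pauli_subgroup_def)
    ultimately show "P = Q"
      using disj by (auto simp: M1_def pauli3_add_eq_0_iff)
  qed
  then have coords_bij: "bij_betw coords M1 UNIV"
    using M1(2) by (simp add: bij_betw_def card_UNIV_bvec card_image card_subset_eq)
  define g where "g = the_inv_into M1 coords"
  have g: "g u \<in> M1" "coords (g u) = u" for u
    using coords_bij by (simp_all add: g_def bij_betw_def the_inv_into_into f_the_inv_into_f)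
  define F where "F = (g (True, False, False), g (False, True, False), g (False, False, True))"
  have "coords (lin_comb z F) = id z" for z
    by (rule bvec_linear_eqI) (simp_all add: lin_comb_bvec_add coords_add F_def g)
  then have coords_lin_comb: "coords (lin_comb z F) = z" for z
    by simp
  have "inj (\<lambda>z. lin_comb z F)"
    by (metis injI coords_lin_comb)
  moreover have "range (\<lambda>z. lin_comb z F) \<subseteq> M1"
    using lin_comb_mem[OF M1(1) g(1) g(1) g(1)] by (auto simp: F_def)
  ultimately have "bij_betw (\<lambda>z. lin_comb z F) UNIV M1"
    using M1(2) by (rule bij_betw_bvec_card)
  then show ?thesis
    using that[of F] by (simp add: M1_def symp_coords coords_lin_comb)
qed

definition frame_map :: "pauli3 \<times> pauli3 \<times> pauli3 \<Rightarrow> pauli3 \<times> pauli3 \<times> pauli3 \<Rightarrow> pauli3 \<Rightarrow> pauli3" where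
  "frame_map E F P = lin_comb (x_bits P) E + lin_comb (z_bits P) F"

lemma symplectic_map_frame_map:
  assumes EE: "\<And>x y. \<not> symp_prod (lin_comb x E) (lin_comb y E)"
    and FF: "\<And>x y. \<not> symp_prod (lin_comb x F) (lin_comb y F)"
    and EF: "\<And>x z. symp_prod (lin_comb x E) (lin_comb z F) = bvec_dot x z"
  shows "symplectic_map (frame_map E F)"
  unfolding symplectic_map_def
proof (intro allI conjI)
  fix P Q
  show "frame_map E F (P + Q) = frame_map E F P + frame_map E F Q"
    by (simp add: frame_map_def lin_comb_bvec_add ac_simps)
  let ?E = "\<lambda>x. lin_comb x E" and ?F = "\<lambda>z. lin_comb z F"
  have "symp_prod (frame_map E F P) (frame_map E F Q) =
      ((symp_prod (?E (x_bits P)) (?E (x_bits Q)) \<noteq> symp_prod (?F (z_bits P)) (?E (x_bits Q)))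
       \<noteq> (symp_prod (?E (x_bits P)) (?F (z_bits Q)) \<noteq> symp_prod (?F (z_bits P)) (?F (z_bits Q))))"
    unfolding frame_map_def symp_prod_add_left symp_prod_add_right ..
  also have "\<dots> = (bvec_dot (x_bits P) (z_bits Q) \<noteq> bvec_dot (x_bits Q) (z_bits P))"
    using EE FF EF symp_prod_commute[of "?F (z_bits P)" "?E (x_bits Q)"] by auto
  also have "\<dots> = symp_prod P Q"
    by (simp add: symp_prod_bits)
  finally show "symp_prod (frame_map E F P) (frame_map E F Q) = symp_prod P Q" .
qed

lemma x_class_eq_image: "x_class = (\<lambda>x. pauli3_of_bits x bvec_zero) ` (UNIV - {bvec_zero})"
  by (simp add: x_class_eq_graph_class graph_class_def)

lemma z_class_eq_image: "z_class = (\<lambda>z. pauli3_of_bits bvec_zero z) ` (UNIV - {bvec_zero})"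
  unfolding z_class_def
proof (intro subset_antisym subsetI)
  fix P assume "P \<in> {P. P \<noteq> 0 \<and> x_bits P = bvec_zero}"
  then have "P = pauli3_of_bits bvec_zero (z_bits P)" "z_bits P \<noteq> bvec_zero"
    by (auto simp: pauli3_eq_iff_bits pauli3_eq_0_iff_bits)
  then show "P \<in> (\<lambda>z. pauli3_of_bits bvec_zero z) ` (UNIV - {bvec_zero})"
    by blast
qed (auto simp: pauli3_eq_0_iff_bits)

lemma image_lin_comb_nonzero:
  assumes "bij_betw (\<lambda>x. lin_comb x E) UNIV (insert 0 A)" "0 \<notin> A"
  shows "(\<lambda>x. lin_comb x E) ` (UNIV - {bvec_zero}) = A"
  using assms by (simp add: bij_betw_def image_set_diff)

lemma symplectic_map_onto_pair:
  assumes A1: "max_comm_class A1" and A2: "max_comm_class A2" and disj: "A1 \<inter> A2 = {}"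
  obtains \<phi> where "symplectic_map \<phi>" "\<phi> ` z_class = A1" "\<phi> ` x_class = A2"
proof -
  obtain E where E: "bij_betw (\<lambda>x. lin_comb x E) UNIV (insert 0 A2)"
    using max_comm_class_basis[OF A2] by blast
  obtain F where F: "bij_betw (\<lambda>z. lin_comb z F) UNIV (insert 0 A1)"
    and EF: "\<And>x z. symp_prod (lin_comb x E) (lin_comb z F) = bvec_dot x z"
    using dual_basis[OF A1 A2 disj E] by blast
  have mem: "lin_comb x E \<in> insert 0 A2" "lin_comb x F \<in> insert 0 A1" for x
    using bij_betwE[OF E] bij_betwE[OF F] by blast+
  have "symplectic_map (frame_map E F)"
    using isotropic_max_comm_class[OF A2 mem(1) mem(1)] isotropic_max_comm_class[OF A1 mem(2) mem(2)] EF
    by (rule symplectic_map_frame_map)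
  moreover have "frame_map E F ` z_class = A1" "frame_map E F ` x_class = A2"
    using image_lin_comb_nonzero[OF E] image_lin_comb_nonzero[OF F] A1 A2
    by (simp_all add: x_class_eq_image z_class_eq_image image_image frame_map_def max_comm_class_iff)
  ultimately show ?thesis
    using that by blast
qed

section \<open>Classes avoiding four disjoint classes\<close>

definition invertible_symmats :: "symmat list" where
  "invertible_symmats = filter symmat_det Enum.enum"

definition graphs_avoiding :: "symmat \<Rightarrow> symmat \<Rightarrow> symmat list" where
  "graphs_avoiding T3 T4 =
     filter (\<lambda>T. symmat_det (symmat_add T T3) \<and> symmat_det (symmat_add T T4)) invertible_symmats"

lemma graphs_avoiding_check:
  "\<forall>T3\<in>set invertible_symmats. \<forall>T4\<in>set invertible_symmats. symmat_det (symmat_add T3 T4) \<longrightarrow>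
     (let A = graphs_avoiding T3 T4 in length A = 6 \<and>
       (\<forall>T\<in>set A. \<exists>S\<in>set A. S \<noteq> T \<and> \<not> symmat_det (symmat_add S T)))"
  by code_simp

lemma mem_graphs_avoiding:
  "T \<in> set (graphs_avoiding T3 T4) \<longleftrightarrow>
     symmat_det T \<and> symmat_det (symmat_add T T3) \<and> symmat_det (symmat_add T T4)"
  by (auto simp: graphs_avoiding_def invertible_symmats_def enum_UNIV)

lemma distinct_graphs_avoiding: "distinct (graphs_avoiding T3 T4)"
  by (simp add: graphs_avoiding_def invertible_symmats_def enum_distinct)

lemma classes_avoiding_graphs:
  "classes_avoiding {z_class, x_class, graph_class T3, graph_class T4} =
    graph_class ` set (graphs_avoiding T3 T4)"
proof (intro subset_antisym subsetI)
  fix D assume D: "D \<in> classes_avoiding {z_class, x_class, graph_class T3, graph_class T4}"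
  then have "max_comm_class D" "D \<inter> z_class = {}"
    by (simp_all add: classes_avoiding_def)
  then obtain T where "D = graph_class T"
    by (rule max_comm_class_eq_graph_class)
  moreover have "T \<in> set (graphs_avoiding T3 T4)"
    using D \<open>D = graph_class T\<close>
    by (simp add: classes_avoiding_def mem_graphs_avoiding graph_class_Int_x_class_eq_empty_iff
        graph_class_Int_eq_empty_iff)
  ultimately show "D \<in> graph_class ` set (graphs_avoiding T3 T4)"
    by blast
next
  fix D assume "D \<in> graph_class ` set (graphs_avoiding T3 T4)"
  then obtain T where "D = graph_class T" "T \<in> set (graphs_avoiding T3 T4)"
    by blast
  then show "D \<in> classes_avoiding {z_class, x_class, graph_class T3, graph_class T4}"
    by (simp add: classes_avoiding_def mem_graphs_avoiding max_comm_class_graph_class graph_class_Int_z_class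
        graph_class_Int_x_class_eq_empty_iff graph_class_Int_eq_empty_iff)
qed

lemma classes_avoiding_standard:
  assumes "max_comm_class B3" "max_comm_class B4" "B3 \<inter> B4 = {}"
    "B3 \<inter> z_class = {}" "B4 \<inter> z_class = {}" "B3 \<inter> x_class = {}" "B4 \<inter> x_class = {}"
  shows "card (classes_avoiding {z_class, x_class, B3, B4}) = 6"
    and "D \<in> classes_avoiding {z_class, x_class, B3, B4} \<Longrightarrow>
      \<exists>D'\<in>classes_avoiding {z_class, x_class, B3, B4}. D' \<noteq> D \<and> D \<inter> D' \<noteq> {}"
proof -
  obtain T3 T4 where T: "B3 = graph_class T3" "B4 = graph_class T4"
    using max_comm_class_eq_graph_class assms(1,2,4,5) by metis
  have det: "symmat_det T3" "symmat_det T4" "symmat_det (symmat_add T3 T4)"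
    using assms(3,6,7) by (simp_all add: T graph_class_Int_x_class_eq_empty_iff graph_class_Int_eq_empty_iff)
  let ?A = "graphs_avoiding T3 T4"
  have check: "length ?A = 6" "\<And>T. T \<in> set ?A \<Longrightarrow> \<exists>S\<in>set ?A. S \<noteq> T \<and> \<not> symmat_det (symmat_add S T)"
    using graphs_avoiding_check det by (simp_all add: invertible_symmats_def enum_UNIV Let_def)
  have avoiding: "classes_avoiding {z_class, x_class, B3, B4} = graph_class ` set ?A"
    unfolding T by (rule classes_avoiding_graphs)
  show "card (classes_avoiding {z_class, x_class, B3, B4}) = 6"
    using check(1) by (simp add: avoiding card_image inj_on_subset[OF inj_graph_class]
        distinct_card distinct_graphs_avoiding)
  assume "D \<in> classes_avoiding {z_class, x_class, B3, B4}"
  then obtain T where "T \<in> set ?A" "D = graph_class T"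
    by (auto simp: avoiding)
  moreover obtain S where "S \<in> set ?A" "S \<noteq> T" "\<not> symmat_det (symmat_add S T)"
    using check(2) calculation(1) by blast
  ultimately show "\<exists>D'\<in>classes_avoiding {z_class, x_class, B3, B4}. D' \<noteq> D \<and> D \<inter> D' \<noteq> {}"
    by (metis avoiding graph_class_Int_eq_empty_iff inj_graph_class inj_eq image_eqI symmat_add_commute)
qed

lemma x_class_neq_z_class: "x_class \<noteq> z_class"
proof -
  have "x_class \<inter> z_class = {}" "x_class \<noteq> {}"
    using graph_class_Int_z_class max_comm_class_graph_class[of symmat_zero]
    by (auto simp: x_class_eq_graph_class max_comm_class_iff)
  then show ?thesis
    by blast
qed

lemma classes_avoiding_four_standard:
  assumes F: "\<forall>A\<in>F. max_comm_class A" "pairwise disjnt F" "card F = 4" "z_class \<in> F" "x_class \<in> F"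
  shows "card (classes_avoiding F) = 6"
    and "D \<in> classes_avoiding F \<Longrightarrow> \<exists>D'\<in>classes_avoiding F. D' \<noteq> D \<and> D \<inter> D' \<noteq> {}"
proof -
  have "card (F - {z_class, x_class}) = 2"
    using F(3-5) x_class_neq_z_class by (simp add: card_Diff_subset)
  then obtain B3 B4 where B: "F - {z_class, x_class} = {B3, B4}" "B3 \<noteq> B4"
    by (meson card_2_iff)
  then have F_eq: "F = {z_class, x_class, B3, B4}"
    using F(4,5) by blast
  have "B3 \<in> F" "B4 \<in> F" "B3 \<noteq> z_class" "B4 \<noteq> z_class" "B3 \<noteq> x_class" "B4 \<noteq> x_class"
    using B by blast+
  then have "max_comm_class B3" "max_comm_class B4" "B3 \<inter> B4 = {}"
    "B3 \<inter> z_class = {}" "B4 \<inter> z_class = {}" "B3 \<inter> x_class = {}" "B4 \<inter> x_class = {}"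
    using F(1,2,4,5) B(2) by (auto simp: pairwise_def disjnt_def)
  note standard = classes_avoiding_standard[OF this]
  show "card (classes_avoiding F) = 6"
    unfolding F_eq by (rule standard(1))
  show "D \<in> classes_avoiding F \<Longrightarrow> \<exists>D'\<in>classes_avoiding F. D' \<noteq> D \<and> D \<inter> D' \<noteq> {}"
    unfolding F_eq by (rule standard(2))
qed

lemma vimage_symplectic_map:
  assumes \<phi>: "symplectic_map \<phi>"
  shows "\<phi> ` (\<phi> -` A) = A" "\<phi> -` (\<phi> ` A) = A" "inj (image \<phi>)"
proof -
  have "bij \<phi>"
    by (rule symplectic_map_bij[OF \<phi>])
  then show "\<phi> ` (\<phi> -` A) = A" "\<phi> -` (\<phi> ` A) = A" "inj (image \<phi>)"
    by (simp_all add: bij_def surj_image_vimage_eq inj_vimage_image_eq inj_image_eq_iff inj_on_def)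
qed

lemma symplectic_map_vimage_family:
  assumes \<phi>: "symplectic_map \<phi>" and F: "\<forall>A\<in>F. max_comm_class A" "pairwise disjnt F"
  shows "image \<phi> ` (vimage \<phi> ` F) = F" "\<forall>B\<in>vimage \<phi> ` F. max_comm_class B"
    "pairwise disjnt (vimage \<phi> ` F)" "card (vimage \<phi> ` F) = card F"
proof -
  note vimage = vimage_symplectic_map[OF \<phi>]
  show image: "image \<phi> ` (vimage \<phi> ` F) = F"
    by (simp add: image_image vimage(1) del: image_vimage_eq)
  show "\<forall>B\<in>vimage \<phi> ` F. max_comm_class B"
  proof
    fix B assume "B \<in> vimage \<phi> ` F"
    then obtain A where "A \<in> F" "\<phi> ` B = A"
      using vimage(1) by blast
    then show "max_comm_class B"
      using F(1) max_comm_class_image_iff[OF \<phi>, of B] by simp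
  qed
  show "pairwise disjnt (vimage \<phi> ` F)"
  proof (rule pairwiseI)
    fix B B' assume "B \<in> vimage \<phi> ` F" "B' \<in> vimage \<phi> ` F" "B \<noteq> B'"
    then obtain A A' where A: "A \<in> F" "A' \<in> F" "B = \<phi> -` A" "B' = \<phi> -` A'" "A \<noteq> A'"
      by blast
    then have "A \<inter> A' = {}"
      using F(2) by (simp add: pairwise_def disjnt_def)
    then show "disjnt B B'"
      by (simp add: disjnt_def A(3,4) flip: vimage_Int)
  qed
  show "card (vimage \<phi> ` F) = card F"
    by (metis image card_image inj_on_subset vimage(3) subset_UNIV)
qed

text \<open>Any four pairwise disjoint classes are moved into the standard position above by a symplectic map.\<close>

lemma classes_avoiding_four:
  assumes F: "\<forall>A\<in>F. max_comm_class A" "pairwise disjnt F" "card F = 4"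
  shows "card (classes_avoiding F) = 6"
    and "D \<in> classes_avoiding F \<Longrightarrow> \<exists>D'\<in>classes_avoiding F. D' \<noteq> D \<and> D \<inter> D' \<noteq> {}"
proof -
  have "finite F"
    using F(3) by (metis card.infinite zero_neq_numeral)
  obtain A1 where A1: "A1 \<in> F"
    using F(3) by (metis all_not_in_conv card.empty zero_neq_numeral)
  then have "card (F - {A1}) = 3"
    using \<open>finite F\<close> F(3) by simp
  then obtain A2 where A2: "A2 \<in> F" "A2 \<noteq> A1"
    by (metis Diff_iff all_not_in_conv card.empty insertI1 zero_neq_numeral)
  then obtain \<phi> where \<phi>: "symplectic_map \<phi>" "\<phi> ` z_class = A1" "\<phi> ` x_class = A2"
    using symplectic_map_onto_pair F(1,2) A1 by (metis pairwise_def disjnt_def)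
  define G where "G = vimage \<phi> ` F"
  note G = symplectic_map_vimage_family[OF \<phi>(1) F(1,2), folded G_def]
  have "z_class \<in> G" "x_class \<in> G"
    using A1 A2 \<phi> vimage_symplectic_map(2)[OF \<phi>(1)] unfolding G_def by (metis image_eqI)+
  then have std: "card (classes_avoiding G) = 6"
    "\<And>E. E \<in> classes_avoiding G \<Longrightarrow> \<exists>E'\<in>classes_avoiding G. E' \<noteq> E \<and> E \<inter> E' \<noteq> {}"
    using classes_avoiding_four_standard[OF G(2,3)] G(4) F(3) by simp_all
  have avoiding: "classes_avoiding F = image \<phi> ` classes_avoiding G"
    using classes_avoiding_image[OF \<phi>(1), of G] G(1) by simp
  have inj: "inj (image \<phi>)"
    by (rule vimage_symplectic_map(3)[OF \<phi>(1)])
  show "card (classes_avoiding F) = 6"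
    using std(1) by (simp add: avoiding card_image inj_on_subset[OF inj])
  assume "D \<in> classes_avoiding F"
  then obtain E where "E \<in> classes_avoiding G" "D = \<phi> ` E"
    by (auto simp: avoiding)
  moreover obtain E' where "E' \<in> classes_avoiding G" "E' \<noteq> E" "E \<inter> E' \<noteq> {}"
    using std(2) calculation(1) by blast
  ultimately show "\<exists>D'\<in>classes_avoiding F. D' \<noteq> D \<and> D \<inter> D' \<noteq> {}"
    using inj by (auto simp: avoiding inj_eq image_Int[symmetric] injD)
qed

section \<open>Adjoints and Parseval's identity\<close>

lemma dim_row_mat_adjoint [simp]: "dim_row (mat_adjoint A) = dim_col A"
  and dim_col_mat_adjoint [simp]: "dim_col (mat_adjoint A) = dim_row A"
  by (simp_all add: mat_adjoint_def)

lemma mat_adjoint_carrier [simp]: "A \<in> carrier_mat n m \<Longrightarrow> mat_adjoint A \<in> carrier_mat m n"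
  by auto

lemma mat_adjoint_index:
  "i < dim_col A \<Longrightarrow> j < dim_row A \<Longrightarrow> mat_adjoint A $$ (i, j) = cnj (A $$ (j, i))"
  by (simp add: mat_adjoint_def mat_of_rows_index)

lemma cscalar_prod_mat_adjoint:
  fixes A :: "complex mat"
  assumes A: "A \<in> carrier_mat n m" and x: "x \<in> carrier_vec m" and y: "y \<in> carrier_vec n"
  shows "(A *\<^sub>v x) \<bullet>c y = x \<bullet>c (mat_adjoint A *\<^sub>v y)"
proof -
  have "(A *\<^sub>v x) \<bullet>c y = (\<Sum>i<n. \<Sum>j<m. A $$ (i, j) * x $ j * cnj (y $ i))"
    using A x y by (simp add: scalar_prod_def lessThan_atLeast0 row_def sum_distrib_right)
  also have "\<dots> = (\<Sum>j<m. \<Sum>i<n. A $$ (i, j) * x $ j * cnj (y $ i))"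
    by (rule sum.swap)
  also have "\<dots> = x \<bullet>c (mat_adjoint A *\<^sub>v y)"
    using A x y by (simp add: scalar_prod_def lessThan_atLeast0 row_def mat_adjoint_index
        sum_distrib_left cnj_sum mult_ac)
  finally show ?thesis .
qed

definition orthonormal :: "complex vec set \<Rightarrow> bool" where
  "orthonormal B \<longleftrightarrow> (\<forall>a\<in>B. \<forall>b\<in>B. a \<bullet>c b = (if a = b then 1 else 0))"

lemma onb8_iff: "onb8 B \<longleftrightarrow> card B = 8 \<and> B \<subseteq> carrier_vec 8 \<and> orthonormal B"
  by (simp add: onb8_def orthonormal_def)

text \<open>Orthonormality of the columns says \<open>V\<^sup>* V = 1\<close>; for a square matrix this gives \<open>V V\<^sup>* = 1\<close>,
  i.e. completeness.\<close>

lemma mat_of_cols_mult_mat_adjoint: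
  assumes us: "set us \<subseteq> carrier_vec n" "length us = n" "distinct us" "orthonormal (set us)"
  shows "mat_of_cols n us * mat_adjoint (mat_of_cols n us) = 1\<^sub>m n"
proof -
  let ?V = "mat_of_cols n us"
  have V: "?V \<in> carrier_mat n n"
    using mat_of_cols_carrier(1)[of n us] us(2) by simp
  have car: "j < n \<Longrightarrow> us ! j \<in> carrier_vec n" for j
    using us(1,2) nth_mem by blast
  have "mat_adjoint ?V * ?V = 1\<^sub>m n"
  proof (rule eq_matI)
    fix i j assume "i < dim_row (1\<^sub>m n :: complex mat)" "j < dim_col (1\<^sub>m n :: complex mat)"
    then have ij: "i < n" "j < n"
      by simp_all
    have "(mat_adjoint ?V * ?V) $$ (i, j) = us ! j \<bullet>c us ! i"
      using ij car[OF ij(1)] car[OF ij(2)] us(2)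
      by (simp add: scalar_prod_def lessThan_atLeast0 mat_adjoint_index row_def col_def
          mat_of_cols_index mult.commute)
    also have "\<dots> = 1\<^sub>m n $$ (i, j)"
      using us ij by (simp add: orthonormal_def nth_eq_iff_index_eq)
    finally show "(mat_adjoint ?V * ?V) $$ (i, j) = 1\<^sub>m n $$ (i, j)" .
  qed (use V in auto)
  then show ?thesis
    by (rule mat_mult_left_right_inverse[OF mat_adjoint_carrier[OF V] V])
qed

lemma parseval:
  assumes B: "finite B" "B \<subseteq> carrier_vec n" "card B = n" "orthonormal B" and v: "v \<in> carrier_vec n"
  shows "v \<bullet>c v = of_real (\<Sum>u\<in>B. (cmod (u \<bullet>c v))\<^sup>2)"
proof -
  obtain us where us: "set us = B" "distinct us"
    using finite_distinct_list B(1) by blast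
  then have len: "length us = n"
    using B(3) distinct_card by fastforce
  have car: "j < n \<Longrightarrow> us ! j \<in> carrier_vec n" for j
    using B(2) us(1) len nth_mem by blast
  let ?V = "mat_of_cols n us"
  define w where "w = mat_adjoint ?V *\<^sub>v v"
  have V: "?V \<in> carrier_mat n n"
    using mat_of_cols_carrier(1)[of n us] len by simp
  then have w: "w \<in> carrier_vec n"
    unfolding w_def using mult_mat_vec_carrier[OF mat_adjoint_carrier v] by blast
  have "?V *\<^sub>v w = (?V * mat_adjoint ?V) *\<^sub>v v"
    unfolding w_def by (rule assoc_mult_mat_vec[OF V mat_adjoint_carrier[OF V] v, symmetric])
  also have "\<dots> = v"
    using mat_of_cols_mult_mat_adjoint[of us n] B us len v by simp
  finally have "v \<bullet>c v = (?V *\<^sub>v w) \<bullet>c v"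
    by simp
  also have "\<dots> = w \<bullet>c w"
    using cscalar_prod_mat_adjoint[OF V w v] by (simp add: w_def)
  also have "\<dots> = (\<Sum>j<n. w $ j * cnj (w $ j))"
    using w by (simp add: scalar_prod_def lessThan_atLeast0)
  also have "\<dots> = (\<Sum>j<n. of_real ((cmod (us ! j \<bullet>c v))\<^sup>2))"
  proof (rule sum.cong)
    fix j assume "j \<in> {..<n}"
    then have "w $ j = cnj (us ! j \<bullet>c v)"
      using v car len by (simp add: w_def scalar_prod_def lessThan_atLeast0 mat_adjoint_index
          mat_of_cols_index row_def cnj_sum mult.commute)
    then show "w $ j * cnj (w $ j) = of_real ((cmod (us ! j \<bullet>c v))\<^sup>2)"
      by (metis complex_cnj_cnj complex_norm_square mult.commute)
  qed simp
  also have "\<dots> = of_real (\<Sum>u\<in>B. (cmod (u \<bullet>c v))\<^sup>2)"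
    by (simp add: us(1)[symmetric] sum.distinct_set_conv_list[OF us(2)] sum_list_sum_nth len
        lessThan_atLeast0)
  finally show ?thesis .
qed

lemma smult_mat_mult_vec:
  "A \<in> carrier_mat n m \<Longrightarrow> v \<in> carrier_vec m \<Longrightarrow> (c \<cdot>\<^sub>m A) *\<^sub>v v = c \<cdot>\<^sub>v (A *\<^sub>v v)"
  by (intro eq_vecI) (auto simp: scalar_prod_def sum_distrib_left mult.assoc)

lemma eigenvalue_involution:
  fixes A :: "complex mat"
  assumes A: "A \<in> carrier_mat n n" "A * A = 1\<^sub>m n" and v: "eigenvector A v k"
  shows "k = 1 \<or> k = -1"
proof -
  have v': "v \<in> carrier_vec n" "v \<noteq> 0\<^sub>v n" "A *\<^sub>v v = k \<cdot>\<^sub>v v"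
    using A(1) v by (auto simp: eigenvector_def)
  have "v = (A * A) *\<^sub>v v"
    using A(2) v' by simp
  also have "\<dots> = (k * k) \<cdot>\<^sub>v v"
    using A(1) v' by (simp add: assoc_mult_mat_vec mult_mat_vec smult_smult_assoc)
  finally have eq: "v = (k * k) \<cdot>\<^sub>v v" .
  have "\<exists>i<n. v $ i \<noteq> 0"
  proof (rule ccontr)
    assume "\<not> (\<exists>i<n. v $ i \<noteq> 0)"
    then have "v = 0\<^sub>v n"
      using v'(1) by (intro eq_vecI) auto
    then show False
      using v'(2) by simp
  qed
  then obtain i where i: "i < n" "v $ i \<noteq> 0"
    by blast
  have "((k * k) \<cdot>\<^sub>v v) $ i = (k * k) * v $ i"
    using i(1) v'(1) by simp
  then have "(k * k) * v $ i = 1 * v $ i"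
    using eq by (metis mult_1)
  then have "k * k = 1"
    using i(2) by (metis mult_cancel_right)
  then show ?thesis
    by (metis power2_eq_1_iff power2_eq_square)
qed

lemma eigenvector_hermitian_orthogonal:
  fixes A :: "complex mat"
  assumes A: "A \<in> carrier_mat n n" "mat_adjoint A = A"
    and u: "u \<in> carrier_vec n" "A *\<^sub>v u = \<alpha> \<cdot>\<^sub>v u" and w: "w \<in> carrier_vec n" "A *\<^sub>v w = \<beta> \<cdot>\<^sub>v w"
    and "cnj \<beta> = \<beta>" "\<alpha> \<noteq> \<beta>"
  shows "u \<bullet>c w = 0"
proof -
  have "\<alpha> * (u \<bullet>c w) = (A *\<^sub>v u) \<bullet>c w"
    using u w by (simp add: scalar_prod_def sum_distrib_left mult_ac)
  also have "\<dots> = u \<bullet>c (A *\<^sub>v w)"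
    using cscalar_prod_mat_adjoint[OF A(1) u(1) w(1)] A(2) by simp
  also have "\<dots> = \<beta> * (u \<bullet>c w)"
    using u w assms(7) by (simp add: scalar_prod_def sum_distrib_left mult_ac)
  finally show ?thesis
    using assms(8) by simp
qed

lemma mat_adjoint_pauli_mat: "mat_adjoint (pauli_mat P) = pauli_mat P"
proof -
  obtain a1 a2 a3 where P: "P = (a1, a2, a3)"
    by (cases P rule: prod_cases3)
  have "cnj (pauli1_entry a i j) = pauli1_entry a j i" for a i j
    by (cases a) auto
  then show ?thesis
    by (intro eq_matI) (simp_all add: mat_adjoint_index P pauli_mat_index)
qed

lemma pauli_mat_mult_vec_carrier [simp]: "u \<in> carrier_vec 8 \<Longrightarrow> pauli_mat P *\<^sub>v u \<in> carrier_vec 8"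
  using mult_mat_vec_carrier[OF pauli_mat_carrier] .

lemma pauli_mat_mult_vec_self:
  "u \<in> carrier_vec 8 \<Longrightarrow> pauli_mat P *\<^sub>v (pauli_mat P *\<^sub>v u) = u"
  by (simp add: assoc_mult_mat_vec[symmetric, of _ 8 8 _ 8] pauli_mat_square)

lemma cscalar_prod_pauli_mat:
  "u \<in> carrier_vec 8 \<Longrightarrow> w \<in> carrier_vec 8 \<Longrightarrow> (pauli_mat P *\<^sub>v u) \<bullet>c w = u \<bullet>c (pauli_mat P *\<^sub>v w)"
  using cscalar_prod_mat_adjoint[OF pauli_mat_carrier] by (simp add: mat_adjoint_pauli_mat)

lemma eigenvalue_pauli_mat: "eigenvector (pauli_mat P) v k \<Longrightarrow> k = 1 \<or> k = -1"
  using eigenvalue_involution[OF pauli_mat_carrier pauli_mat_square] .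

lemma eigenvector_pauli_mat_orthogonal:
  assumes "eigenvector (pauli_mat P) u \<alpha>" "eigenvector (pauli_mat P) w \<beta>" "\<alpha> \<noteq> \<beta>"
  shows "u \<bullet>c w = 0"
  using assms eigenvalue_pauli_mat[OF assms(2)]
  by (intro eigenvector_hermitian_orthogonal[OF pauli_mat_carrier mat_adjoint_pauli_mat])
    (auto simp: eigenvector_def)

lemma eigenvector_pauli_mat_mult_vec:
  assumes "eigenvector (pauli_mat P) u k"
  shows "eigenvector (pauli_mat P) (pauli_mat R *\<^sub>v u) ((if symp_prod P R then -1 else 1) * k)"
proof -
  have u: "u \<in> carrier_vec 8" "u \<noteq> 0\<^sub>v 8" "pauli_mat P *\<^sub>v u = k \<cdot>\<^sub>v u"
    using assms by (auto simp: eigenvector_def)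
  have "pauli_mat P *\<^sub>v (pauli_mat R *\<^sub>v u) = (pauli_mat P * pauli_mat R) *\<^sub>v u"
    by (rule assoc_mult_mat_vec[symmetric, OF pauli_mat_carrier pauli_mat_carrier u(1)])
  also have "\<dots> = ((if symp_prod P R then -1 else 1) \<cdot>\<^sub>m (pauli_mat R * pauli_mat P)) *\<^sub>v u"
    using pauli_mat_mult_commute[of R P] symp_prod_commute[of P R] by (simp add: smult_smult_mat)
  also have "\<dots> = (if symp_prod P R then -1 else 1) \<cdot>\<^sub>v (pauli_mat R *\<^sub>v (pauli_mat P *\<^sub>v u))"
    using smult_mat_mult_vec[OF mult_carrier_mat[OF pauli_mat_carrier pauli_mat_carrier] u(1)]
      assoc_mult_mat_vec[OF pauli_mat_carrier pauli_mat_carrier u(1)] by simp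
  also have "\<dots> = ((if symp_prod P R then -1 else 1) * k) \<cdot>\<^sub>v (pauli_mat R *\<^sub>v u)"
    using u by (simp add: mult_mat_vec[OF pauli_mat_carrier] smult_smult_assoc)
  finally have "pauli_mat P *\<^sub>v (pauli_mat R *\<^sub>v u) = ((if symp_prod P R then -1 else 1) * k) \<cdot>\<^sub>v (pauli_mat R *\<^sub>v u)" .
  moreover have "pauli_mat R *\<^sub>v u \<noteq> 0\<^sub>v 8"
  proof
    assume "pauli_mat R *\<^sub>v u = 0\<^sub>v 8"
    then have "u = pauli_mat R *\<^sub>v 0\<^sub>v 8"
      using pauli_mat_mult_vec_self[OF u(1), of R] by simp
    also have "\<dots> = 0\<^sub>v 8"
      by (intro eq_vecI) auto
    finally show False
      using u(2) by simp
  qed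
  ultimately show ?thesis
    using u by (simp add: eigenvector_def)
qed

section \<open>Mutually unbiased bases from disjoint classes\<close>

lemma cscalar_prod_smult_right: "u \<in> carrier_vec n \<Longrightarrow> w \<in> carrier_vec n \<Longrightarrow> u \<bullet>c (c \<cdot>\<^sub>v w) = cnj c * (u \<bullet>c w)"
  by (simp add: scalar_prod_def sum_distrib_left mult_ac)

lemma cmod_cscalar_prod_pauli_mat_eigenvector:
  assumes b: "eigenvector (pauli_mat R) b \<mu>" and a: "a \<in> carrier_vec 8"
  shows "cmod ((pauli_mat R *\<^sub>v a) \<bullet>c b) = cmod (a \<bullet>c b)"
proof -
  have b': "b \<in> carrier_vec 8" "pauli_mat R *\<^sub>v b = \<mu> \<cdot>\<^sub>v b"
    using b by (simp_all add: eigenvector_def)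
  have "(pauli_mat R *\<^sub>v a) \<bullet>c b = cnj \<mu> * (a \<bullet>c b)"
    using a b' by (simp add: cscalar_prod_pauli_mat cscalar_prod_smult_right)
  then show ?thesis
    using eigenvalue_pauli_mat[OF b] by (auto simp: norm_mult)
qed

text \<open>For \<open>R \<noteq> R'\<close> some \<open>P \<in> C\<close> anticommutes with exactly one of \<open>R\<close>, \<open>R'\<close>, so \<open>R a\<close> and \<open>R' a\<close> are
  eigenvectors of \<open>P\<close> for opposite eigenvalues.\<close>

lemma cscalar_prod_pauli_orbit:
  assumes C: "max_comm_class C" and D: "max_comm_class D" and CD: "C \<inter> D = {}"
    and a: "a \<in> carrier_vec 8" "a \<bullet>c a = 1" "\<forall>P\<in>C. \<exists>k. eigenvector (pauli_mat P) a k"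
    and R: "R \<in> insert 0 D" "R' \<in> insert 0 D"
  shows "(pauli_mat R *\<^sub>v a) \<bullet>c (pauli_mat R' *\<^sub>v a) = (if R = R' then 1 else 0)"
proof (cases "R = R'")
  case True
  then show ?thesis
    using a by (simp add: cscalar_prod_pauli_mat pauli_mat_mult_vec_self)
next
  case False
  then have "R + R' \<in> D"
    using R pauli_subgroup_max_comm_class[OF D] by (auto simp: pauli_subgroup_def pauli3_add_eq_0_iff)
  then have "R + R' \<notin> symp_perp C"
    using CD symp_perp_max_comm_class[OF C] D by (auto simp: max_comm_class_iff)
  then obtain P where P: "P \<in> C" "symp_prod P R \<noteq> symp_prod P R'"
    by (auto simp: symp_perp_def symp_prod_add_left symp_prod_commute)
  obtain k where k: "eigenvector (pauli_mat P) a k"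
    using a(3) P(1) by blast
  have "k \<noteq> 0"
    using eigenvalue_pauli_mat[OF k] by auto
  then have "(if symp_prod P R then -1 else 1) * k \<noteq> (if symp_prod P R' then -1 else 1) * k"
    using P(2) by auto
  then have "(pauli_mat R *\<^sub>v a) \<bullet>c (pauli_mat R' *\<^sub>v a) = 0"
    by (rule eigenvector_pauli_mat_orthogonal[OF eigenvector_pauli_mat_mult_vec[OF k]
          eigenvector_pauli_mat_mult_vec[OF k]])
  with False show ?thesis
    by simp
qed

lemma common_eigenbases_unbiased:
  assumes C: "max_comm_class C" and D: "max_comm_class D" and CD: "C \<inter> D = {}"
    and B1: "common_eigenbasis C B1" and B2: "common_eigenbasis D B2" and a: "a \<in> B1" and b: "b \<in> B2"
  shows "cmod (a \<bullet>c b) = 1 / sqrt 8"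
proof -
  have a': "a \<in> carrier_vec 8" "a \<bullet>c a = 1" "\<forall>P\<in>C. \<exists>k. eigenvector (pauli_mat P) a k"
    using B1 a by (auto simp: common_eigenbasis_def onb8_def)
  have b': "b \<in> carrier_vec 8" "b \<bullet>c b = 1"
    using B2 b by (auto simp: common_eigenbasis_def onb8_def)
  let ?orbit = "(\<lambda>R. pauli_mat R *\<^sub>v a) ` insert 0 D"
  note ip = cscalar_prod_pauli_orbit[OF C D CD a']
  have inj: "inj_on (\<lambda>R. pauli_mat R *\<^sub>v a) (insert 0 D)"
    by (rule inj_onI) (metis ip zero_neq_one)
  have "card ?orbit = card (insert 0 D)"
    by (rule card_image[OF inj])
  also have "\<dots> = 8"
    using D by (simp add: max_comm_class_iff)
  finally have card: "card ?orbit = 8" .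
  have "orthonormal ?orbit"
    unfolding orthonormal_def
  proof (intro ballI)
    fix u u' assume "u \<in> ?orbit" "u' \<in> ?orbit"
    then obtain R R' where R: "R \<in> insert 0 D" "R' \<in> insert 0 D"
      and u: "u = pauli_mat R *\<^sub>v a" "u' = pauli_mat R' *\<^sub>v a"
      by blast
    then show "u \<bullet>c u' = (if u = u' then 1 else 0)"
      using ip[OF R] inj_on_eq_iff[OF inj R] by simp
  qed
  moreover have "?orbit \<subseteq> carrier_vec 8"
    using a'(1) by auto
  ultimately have "b \<bullet>c b = of_real (\<Sum>u\<in>?orbit. (cmod (u \<bullet>c b))\<^sup>2)"
    using parseval[OF finite_imageI[OF finite] _ card _ b'(1)] by blast
  also have "(\<Sum>u\<in>?orbit. (cmod (u \<bullet>c b))\<^sup>2) = (\<Sum>u\<in>?orbit. (cmod (a \<bullet>c b))\<^sup>2)"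
  proof (rule sum.cong)
    fix u assume "u \<in> ?orbit"
    then obtain R where R: "R \<in> insert 0 D" "u = pauli_mat R *\<^sub>v a"
      by blast
    show "(cmod (u \<bullet>c b))\<^sup>2 = (cmod (a \<bullet>c b))\<^sup>2"
    proof (cases "R = 0")
      case True
      then show ?thesis
        using R a'(1) by (simp add: pauli_mat_zero)
    next
      case False
      then obtain \<mu> where "eigenvector (pauli_mat R) b \<mu>"
        using B2 b R by (auto simp: common_eigenbasis_def)
      then show ?thesis
        using R a'(1) cmod_cscalar_prod_pauli_mat_eigenvector by simp
    qed
  qed simp
  finally have "(1::complex) = of_real (8 * (cmod (a \<bullet>c b))\<^sup>2)"
    using b'(2) card by simp
  then have "8 * (cmod (a \<bullet>c b))\<^sup>2 = 1"
    by (metis of_real_eq_1_iff)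
  then have "(cmod (a \<bullet>c b))\<^sup>2 = (1 / sqrt 8)\<^sup>2"
    by (simp add: power_divide)
  then show ?thesis
    by (simp add: power2_eq_iff_nonneg)
qed

lemma onb8_facts:
  assumes "onb8 B"
  shows "finite B" "B \<subseteq> carrier_vec 8" "card B = 8" "orthonormal B" "B \<noteq> {}"
  using assms by (auto simp: onb8_iff intro: card_ge_0_finite)

text \<open>If all vectors of \<open>B\<close> had the same eigenvalue for \<open>P\<close>, then for \<open>R\<close> anticommuting with \<open>P\<close> the
  unit vector \<open>R a\<close> would be orthogonal to all of \<open>B\<close>, contradicting Parseval's identity.\<close>

lemma common_eigenbasis_other_eigenvalue:
  assumes D: "max_comm_class D" and B: "common_eigenbasis D B" and P: "P \<in> D"
  obtains a k where "a \<in> B" "eigenvector (pauli_mat P) a k" "k \<noteq> \<beta>"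
proof -
  note onb = onb8_facts[OF B[unfolded common_eigenbasis_def, THEN conjunct1]]
  have eig: "\<forall>a\<in>B. \<exists>k. eigenvector (pauli_mat P) a k"
    using B P by (auto simp: common_eigenbasis_def)
  obtain a0 k0 where a0: "a0 \<in> B" "eigenvector (pauli_mat P) a0 k0"
    using onb(5) eig by blast
  show ?thesis
  proof (cases "k0 = \<beta>")
    case False
    then show ?thesis
      using that a0 by blast
  next
    case True
    have "P \<noteq> 0"
      using D P by (auto simp: max_comm_class_iff)
    then obtain R where "symp_prod R P"
      by (rule symp_prod_nondegenerate)
    let ?q = "pauli_mat R *\<^sub>v a0"
    have q: "eigenvector (pauli_mat P) ?q (- k0)"
      using eigenvector_pauli_mat_mult_vec[OF a0(2), of R] \<open>symp_prod R P\<close> symp_prod_commute by simp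
    have a0': "a0 \<in> carrier_vec 8" "a0 \<bullet>c a0 = 1"
      using a0(1) onb(2,4) by (auto simp: orthonormal_def)
    then have "(1::complex) = of_real (\<Sum>a\<in>B. (cmod (a \<bullet>c ?q))\<^sup>2)"
      using parseval[OF onb(1-4), of ?q] by (simp add: cscalar_prod_pauli_mat pauli_mat_mult_vec_self)
    then obtain a where a: "a \<in> B" "a \<bullet>c ?q \<noteq> 0"
      by (metis (mono_tags, lifting) norm_zero of_real_0 power_zero_numeral sum.neutral zero_neq_one)
    obtain k where k: "eigenvector (pauli_mat P) a k"
      using eig a(1) by blast
    have "k = - k0"
      using eigenvector_pauli_mat_orthogonal[OF k q] a(2) by blast
    moreover have "k0 \<noteq> 0"
      using eigenvalue_pauli_mat[OF a0(2)] by auto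
    ultimately show ?thesis
      using that a(1) k True by simp
  qed
qed

lemma not_mutually_unbiased_common_pauli:
  assumes "max_comm_class D" "common_eigenbasis D B" "common_eigenbasis E B'" "P \<in> D" "P \<in> E"
  shows "\<not> mutually_unbiased B B'"
proof
  assume unbiased: "mutually_unbiased B B'"
  obtain b \<beta> where b: "b \<in> B'" "eigenvector (pauli_mat P) b \<beta>"
    using assms(3,5) onb8_facts(5) by (fastforce simp: common_eigenbasis_def)
  obtain a k where a: "a \<in> B" "eigenvector (pauli_mat P) a k" "k \<noteq> \<beta>"
    using common_eigenbasis_other_eigenvalue[OF assms(1,2,4)] by blast
  have "cmod (a \<bullet>c b) = 1 / sqrt 8"
    using unbiased a(1) b(1) by (simp add: mutually_unbiased_def)
  moreover have "a \<bullet>c b = 0"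
    by (rule eigenvector_pauli_mat_orthogonal[OF a(2) b(2) a(3)])
  ultimately show False
    by simp
qed

lemma weakly_unextendible_MUBs_common_eigenbases:
  assumes F: "unextendible_classes F" and \<beta>: "\<And>C. C \<in> F \<Longrightarrow> common_eigenbasis C (\<beta> C)"
  shows "inj_on \<beta> F" and "weakly_unextendible_MUBs (\<beta> ` F)"
proof -
  have classes: "\<And>C. C \<in> F \<Longrightarrow> max_comm_class C"
    and disj: "\<And>C C'. C \<in> F \<Longrightarrow> C' \<in> F \<Longrightarrow> C \<noteq> C' \<Longrightarrow> C \<inter> C' = {}"
    using F by (auto simp: unextendible_classes_def)
  have onb: "onb8 (\<beta> C)" if "C \<in> F" for C
    using \<beta>[OF that] by (simp add: common_eigenbasis_def)
  have unbiased: "mutually_unbiased (\<beta> C) (\<beta> C')" if "C \<in> F" "C' \<in> F" "C \<noteq> C'" for C C'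
    unfolding mutually_unbiased_def
    using common_eigenbases_unbiased[OF classes classes disj \<beta> \<beta>] that by blast
  show inj: "inj_on \<beta> F"
  proof (rule inj_onI, rule ccontr)
    fix C C' assume CC': "C \<in> F" "C' \<in> F" "\<beta> C = \<beta> C'" "C \<noteq> C'"
    obtain a where a: "a \<in> \<beta> C" "a \<bullet>c a = 1"
      using onb8_facts[OF onb[OF CC'(1)]] by (auto simp: orthonormal_def)
    moreover have "mutually_unbiased (\<beta> C) (\<beta> C)"
      using unbiased[OF CC'(1,2,4)] CC'(3) by simp
    ultimately have "cmod (a \<bullet>c a) = 1 / sqrt 8"
      unfolding mutually_unbiased_def by blast
    then show False
      using a(2) by simp
  qed
  show "weakly_unextendible_MUBs (\<beta> ` F)"
    unfolding weakly_unextendible_MUBs_def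
  proof (intro conjI notI)
    show "\<forall>B\<in>\<beta> ` F. onb8 B"
      using onb by blast
    show "\<forall>B1\<in>\<beta> ` F. \<forall>B2\<in>\<beta> ` F. B1 \<noteq> B2 \<longrightarrow> mutually_unbiased B1 B2"
      using unbiased by blast
  next
    assume "\<exists>D B. max_comm_class D \<and> common_eigenbasis D B \<and> (\<forall>B'\<in>\<beta> ` F. mutually_unbiased B B')"
    then obtain D B where D: "max_comm_class D" "common_eigenbasis D B"
      and unbiased_D: "\<forall>B'\<in>\<beta> ` F. mutually_unbiased B B'"
      by blast
    have "\<not> D \<subseteq> nonid_paulis - \<Union>F"
      using F D(1) by (auto simp: unextendible_classes_def)
    moreover have "D \<subseteq> nonid_paulis"
      using D(1) by (simp add: max_comm_class_def)
    ultimately obtain P C where "P \<in> D" "C \<in> F" "P \<in> C"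
      by blast
    then show False
      using not_mutually_unbiased_common_pauli[OF D \<beta>] unbiased_D by blast
  qed
qed

lemma subset_Union_iff_classes_avoiding:
  assumes cover: "\<Union>\<C> = nonid_paulis" and disj: "pairwise disjnt \<C>" and "\<A> \<subseteq> \<C>"
    and S: "max_comm_class S"
  shows "S \<subseteq> \<Union>\<A> \<longleftrightarrow> S \<in> classes_avoiding (\<C> - \<A>)"
proof
  assume "S \<subseteq> \<Union>\<A>"
  then have "S \<inter> B = {}" if "B \<in> \<C> - \<A>" for B
    using that disj \<open>\<A> \<subseteq> \<C>\<close> by (fastforce simp: pairwise_def disjnt_def)
  then show "S \<in> classes_avoiding (\<C> - \<A>)"
    using S by (simp add: classes_avoiding_def)
next
  assume avoiding: "S \<in> classes_avoiding (\<C> - \<A>)"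
  show "S \<subseteq> \<Union>\<A>"
  proof
    fix x assume "x \<in> S"
    moreover have "S \<subseteq> \<Union>\<C>"
      using S cover by (simp add: max_comm_class_def)
    ultimately obtain B where "B \<in> \<C>" "x \<in> B"
      by blast
    moreover have "B \<notin> \<C> - \<A>"
      using avoiding \<open>x \<in> S\<close> \<open>x \<in> B\<close> unfolding classes_avoiding_def by blast
    ultimately show "x \<in> \<Union>\<A>"
      by blast
  qed
qed

lemma unextendible_classes_insert:
  assumes F: "\<forall>C\<in>F. max_comm_class C" "pairwise disjnt F" and S: "S \<in> classes_avoiding F"
    and meets: "\<forall>D\<in>classes_avoiding F. D \<noteq> S \<longrightarrow> D \<inter> S \<noteq> {}"
  shows "unextendible_classes (insert S F)"
  unfolding unextendible_classes_def
proof (intro conjI notI)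
  have S': "max_comm_class S" "\<forall>C\<in>F. S \<inter> C = {}"
    using S by (simp_all add: classes_avoiding_def)
  then show "\<forall>C\<in>insert S F. max_comm_class C"
    using F(1) by blast
  show "\<forall>C\<in>insert S F. \<forall>D\<in>insert S F. C \<noteq> D \<longrightarrow> C \<inter> D = {}"
    using S'(2) F(2) unfolding pairwise_def disjnt_def by blast
  assume "\<exists>D. max_comm_class D \<and> D \<subseteq> nonid_paulis - \<Union>(insert S F)"
  then obtain D where D: "max_comm_class D" "D \<subseteq> nonid_paulis - \<Union>(insert S F)"
    by blast
  then have "D \<in> classes_avoiding F" "D \<inter> S = {}"
    unfolding classes_avoiding_def by blast+
  moreover have "S \<noteq> {}"
    using S'(1) by (auto simp: max_comm_class_iff)
  ultimately show False
    using meets by blast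
qed

text \<open>The classes avoiding the last four members of a complete set are the first five and exactly
  one more, \<open>S\<close>; since each avoiding class meets another one, every one of the first five meets \<open>S\<close>.\<close>

lemma complete_set_five_four:
  assumes \<C>: "\<forall>A\<in>\<C>. max_comm_class A" "pairwise disjnt \<C>" "\<Union>\<C> = nonid_paulis"
    and \<A>: "\<A> \<subseteq> \<C>" "card \<A> = 5" "card (\<C> - \<A>) = 4"
  shows "\<exists>!S. max_comm_class S \<and> S \<subseteq> \<Union>\<A> \<and> S \<notin> \<A>"
    and "max_comm_class S \<Longrightarrow> S \<subseteq> \<Union>\<A> \<Longrightarrow> S \<notin> \<A> \<Longrightarrow>
      card (insert S (\<C> - \<A>)) = 5 \<and> unextendible_classes (insert S (\<C> - \<A>))"
proof -
  let ?F = "\<C> - \<A>"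
  have F: "\<forall>A\<in>?F. max_comm_class A" "pairwise disjnt ?F"
    using \<C>(1,2) by (auto simp: pairwise_def)
  note avoiding = classes_avoiding_four[OF F \<A>(3)]
  have iff: "max_comm_class S \<and> S \<subseteq> \<Union>\<A> \<and> S \<notin> \<A> \<longleftrightarrow> S \<in> classes_avoiding ?F - \<A>" for S
    using subset_Union_iff_classes_avoiding[OF \<C>(3,2) \<A>(1)] by (auto simp: classes_avoiding_def)
  have "\<A> \<subseteq> classes_avoiding ?F"
    using subset_Union_iff_classes_avoiding[OF \<C>(3,2) \<A>(1)] \<C>(1) \<A>(1) by blast
  then have "card (classes_avoiding ?F - \<A>) = 1"
    using avoiding(1) \<A>(2) by (simp add: card_Diff_subset finite_subset[OF _ finite])
  then obtain S0 where S0: "classes_avoiding ?F - \<A> = {S0}"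
    by (rule card_1_singletonE)
  then show "\<exists>!S. max_comm_class S \<and> S \<subseteq> \<Union>\<A> \<and> S \<notin> \<A>"
    unfolding iff by blast
  assume "max_comm_class S" "S \<subseteq> \<Union>\<A>" "S \<notin> \<A>"
  then have S: "S \<in> classes_avoiding ?F" "S \<notin> \<A>" "S = S0"
    using S0 iff by blast+
  have "D \<inter> S \<noteq> {}" if D: "D \<in> classes_avoiding ?F" "D \<noteq> S" for D
  proof -
    have "D \<in> \<A>"
      using D S0 S(3) by blast
    obtain D' where "D' \<in> classes_avoiding ?F" "D' \<noteq> D" "D \<inter> D' \<noteq> {}"
      using avoiding(2)[OF D(1)] by blast
    moreover have "D' \<notin> \<A>"
      using calculation \<open>D \<in> \<A>\<close> \<A>(1) \<C>(2) by (auto simp: pairwise_def disjnt_def)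
    ultimately show ?thesis
      using S0 S(3) by blast
  qed
  moreover have "S \<notin> ?F"
  proof
    assume "S \<in> ?F"
    then have "S = {}"
      using S(1) unfolding classes_avoiding_def by blast
    then show False
      using S(1) by (simp add: classes_avoiding_def max_comm_class_iff)
  qed
  moreover have "finite ?F"
    using \<A>(3) by (simp add: card_ge_0_finite)
  ultimately show "card (insert S ?F) = 5 \<and> unextendible_classes (insert S ?F)"
    using unextendible_classes_insert[OF F S(1)] \<A>(3) by simp
qed

lemma indexed_complete_set:
  fixes C :: "nat \<Rightarrow> pauli3 set"
  assumes classes: "\<forall>i\<in>I. max_comm_class (C i)"
    and disjoint: "\<forall>i\<in>I. \<forall>j\<in>I. i \<noteq> j \<longrightarrow> C i \<inter> C j = {}"
  shows "inj_on C I" "\<forall>A\<in>C ` I. max_comm_class A" "pairwise disjnt (C ` I)"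
proof -
  have "C i \<noteq> {}" if "i \<in> I" for i
    using classes that by (auto simp: max_comm_class_iff)
  then show "inj_on C I"
    using disjoint by (metis inj_onI Int_absorb)
  show "\<forall>A\<in>C ` I. max_comm_class A"
    using classes by blast
  show "pairwise disjnt (C ` I)"
  proof (rule pairwiseI)
    fix A B assume "A \<in> C ` I" "B \<in> C ` I" "A \<noteq> B"
    then obtain i j where "i \<in> I" "j \<in> I" "i \<noteq> j" "A = C i" "B = C j"
      by blast
    then show "disjnt A B"
      using disjoint by (simp add: disjnt_def)
  qed
qed

lemma image_first_five_last_four:
  assumes inj: "inj_on C {1..9 :: nat}"
  shows "C ` {1..9} - C ` {1..5} = {C 6, C 7, C 8, C 9}" "C ` {1..5} \<subseteq> C ` {1..9}"
    "card (C ` {1..5}) = 5" "card (C ` {1..9} - C ` {1..5}) = 4"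
proof -
  have diff: "{1..9} - {1..5} = {6, 7, 8, 9 :: nat}" and sub: "{1..5} \<subseteq> {1..9 :: nat}"
    by auto
  show last_four: "C ` {1..9} - C ` {1..5} = {C 6, C 7, C 8, C 9}"
    using inj_on_image_set_diff[OF inj, of "{1..9}" "{1..5}"] unfolding diff by auto
  show "C ` {1..5} \<subseteq> C ` {1..9}"
    using sub by (rule image_mono)
  show "card (C ` {1..5}) = 5"
    using card_image[OF inj_on_subset[OF inj sub]] by simp
  show "card (C ` {1..9} - C ` {1..5}) = 4"
    unfolding last_four using inj by (simp add: inj_on_eq_iff)
qed

lemma weakly_unextendible_MUBs_five:
  assumes unext: "unextendible_classes {A1, A2, A3, A4, A5}" and card: "card {A1, A2, A3, A4, A5} = 5"
    and B: "common_eigenbasis A1 B1" "common_eigenbasis A2 B2" "common_eigenbasis A3 B3"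
      "common_eigenbasis A4 B4" "common_eigenbasis A5 B5"
  shows "card {B1, B2, B3, B4, B5} = 5 \<and> weakly_unextendible_MUBs {B1, B2, B3, B4, B5}"
proof -
  have "distinct [A1, A2, A3, A4, A5]"
    using card by (intro card_distinct) simp
  then have neq: "A1 \<noteq> A2" "A1 \<noteq> A3" "A1 \<noteq> A4" "A1 \<noteq> A5" "A2 \<noteq> A3" "A2 \<noteq> A4" "A2 \<noteq> A5"
    "A3 \<noteq> A4" "A3 \<noteq> A5" "A4 \<noteq> A5"
    by simp_all
  define \<beta> where "\<beta> X = (if X = A1 then B1 else if X = A2 then B2 else if X = A3 then B3
      else if X = A4 then B4 else B5)" for X
  have "common_eigenbasis X (\<beta> X)" if "X \<in> {A1, A2, A3, A4, A5}" for X
    using that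
  proof (elim insertE emptyE)
  qed (use B neq neq[THEN not_sym] in \<open>simp_all add: \<beta>_def\<close>)
  note MUBs = weakly_unextendible_MUBs_common_eigenbases[OF unext this]
  have "\<beta> A1 = B1" "\<beta> A2 = B2" "\<beta> A3 = B3" "\<beta> A4 = B4" "\<beta> A5 = B5"
    using neq neq[THEN not_sym] by (simp_all add: \<beta>_def)
  then have "\<beta> ` {A1, A2, A3, A4, A5} = {B1, B2, B3, B4, B5}"
    by simp
  then show ?thesis
    using MUBs card_image[OF MUBs(1)] card by simp
qed

theorem theorem3:
  fixes C :: "nat \<Rightarrow> pauli3 set"
  assumes classes: "\<forall>i\<in>{1..9}. max_comm_class (C i)"
    and disjoint: "\<forall>i\<in>{1..9}. \<forall>j\<in>{1..9}. i \<noteq> j \<longrightarrow> C i \<inter> C j = {}"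
    and complete: "(\<Union>i\<in>{1..9}. C i) = nonid_paulis"
  shows "(\<exists>!S. max_comm_class S \<and> S \<subseteq> (\<Union>i\<in>{1..5}. C i) \<and> (\<forall>i\<in>{1..5}. S \<noteq> C i)) \<and>
    (\<forall>S. max_comm_class S \<and> S \<subseteq> (\<Union>i\<in>{1..5}. C i) \<and> (\<forall>i\<in>{1..5}. S \<noteq> C i) \<longrightarrow>
           card {C 6, C 7, C 8, C 9, S} = 5 \<and>
           unextendible_classes {C 6, C 7, C 8, C 9, S} \<and>
           (\<forall>B6 B7 B8 B9 BS. common_eigenbasis (C 6) B6 \<and> common_eigenbasis (C 7) B7 \<and>
              common_eigenbasis (C 8) B8 \<and> common_eigenbasis (C 9) B9 \<and>
              common_eigenbasis S BS \<longrightarrow>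
              card {B6, B7, B8, B9, BS} = 5 \<and> weakly_unextendible_MUBs {B6, B7, B8, B9, BS}))"
proof -
  note \<C> = indexed_complete_set[OF classes disjoint]
  note nine = image_first_five_last_four[OF \<C>(1)]
  note main = complete_set_five_four[OF \<C>(2,3) complete nine(2-4), unfolded nine(1)]
  have new: "(\<forall>i\<in>{1..5}. S \<noteq> C i) \<longleftrightarrow> S \<notin> C ` {1..5}" for S
    by blast
  show ?thesis
    unfolding new
  proof (intro conjI allI impI)
    show "\<exists>!S. max_comm_class S \<and> S \<subseteq> \<Union>(C ` {1..5}) \<and> S \<notin> C ` {1..5}"
      by (rule main(1))
    fix S assume "max_comm_class S \<and> S \<subseteq> \<Union>(C ` {1..5}) \<and> S \<notin> C ` {1..5}"
    then show card: "card {C 6, C 7, C 8, C 9, S} = 5"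
      and unext: "unextendible_classes {C 6, C 7, C 8, C 9, S}"
      using main(2) by (simp_all add: insert_commute)
    show "card {B6, B7, B8, B9, BS} = 5" "weakly_unextendible_MUBs {B6, B7, B8, B9, BS}"
      if "common_eigenbasis (C 6) B6 \<and> common_eigenbasis (C 7) B7 \<and> common_eigenbasis (C 8) B8 \<and>
        common_eigenbasis (C 9) B9 \<and> common_eigenbasis S BS" for B6 B7 B8 B9 BS
      using weakly_unextendible_MUBs_five[OF unext card] that by blast+
  qed
qed

end
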